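(* Let $\mathcal{A},\mathcal{B}\in\mathbb{S}^{[m,n]}$ with $\mathcal{B}$ positive definite, let $\lambda(x)=\mathcal{A}x^m/\mathcal{B}x^m$, $g(x)=\nabla\lambda(x)$, $\Omega=\mathbb{S}^{n-1}_+=\{x\in\mathbb{R}^n:x^Tx=1,x\ge0\}$, and let $P_\Omega$ be a Euclidean projection onto $\Omega$. Fix constants $\rho\in(0,1)$ and $0<\beta_{\min}\le\beta_{\max}$. Let $\{x_k\}$ be generated by the following algorithm (SPG1): choose $x_0\in\Omega$, $\beta_0=1/\|g(x_0)\|$; at iteration $k$, with $g_k=g(x_k)$: (1) compute $z_k=P_\Omega(x_k+\beta_k g_k)$ and $d_k=z_k-x_k$; (2) if $d_k=0$ stop; otherwise set $\alpha=1$; (3) while $\lambda(x_k+\alpha d_k)<\lambda(x_k)+\rho\alpha g_k^Td_k$, replace $\alpha$ by $\alpha/2$; then set $\alpha_k=\alpha$, $x_{k+1}=x_k+\alpha_kd_k$, $s_k=x_{k+1}-x_k$, $y_k=g_{k+1}-g_k$; (4) if $b_k=\langle s_k,y_k\rangle\le0$ set $\beta_{k+1}=\beta_{\max}$, else $\beta_{k+1}=\max\{\beta_{\min},\min\{\beta_{\max},\langle s_k,s_k\rangle/b_k\}\}$. Then: if the algorithm stops at some $x_k$ (i.e. $d_k=0$), $(\lambda(x_k),x_k)$ is a solution of the TEiCP for $(\mathcal{A},\mathcal{B})$; otherwise every accumulation point $x^*$ of $\{x_k\}$ is a constrained stationary point of the problem $\max\{\lambda(x):x\in\Omega\}$ (so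 that $(\lambda(x^* ),x^* )$ solves the TEiCP), and the sequence $\{\lambda(x_k)\}$ converges to a Pareto eigenvalue of $(\mathcal{A},\mathcal{B})$.
   Context: $\mathbb{S}^{[m,n]}$ is the set of real symmetric $m$th-order $n$-dimensional tensors; $(\mathcal{A}x^{m-1})_i=\sum_{i_2,\dots,i_m=1}^n a_{i i_2\cdots i_m}x_{i_2}\cdots x_{i_m}$, $\mathcal{A}x^m=x^T(\mathcal{A}x^{m-1})$; $\mathcal{B}$ positive definite means $\mathcal{B}x^m>0$ for $x\ne0$. The gradient is $g(x)=\frac{m}{\mathcal{B}x^m}\bigl(\mathcal{A}x^{m-1}-\lambda(x)\mathcal{B}x^{m-1}\bigr)$. The TEiCP for $(\mathcal{A},\mathcal{B})$ asks for $\lambda\in\mathbb{R}$ and $x\in\mathbb{R}^n\setminus\{0\}$ with $x\ge0$, $(\lambda\mathcal{B}-\mathcal{A})x^{m-1}\ge0$, $\langle x,(\lambda\mathcal{B}-\mathcal{A})x^{m-1}\rangle=0$; such $\lambda$ is a Pareto eigenvalue and $x$ a Pareto eigenvector. A constrained stationary point of $\max\{\lambda(x):x\in\Omega\}$ is a point $x\in\Omega$ satisfying the KKT conditions: there exist $\mu\in\mathbb{R}$, $v\in\mathbb{R}^n$ with $\nabla\lambda(x)+2\mu x+v=0$, $v\ge0$, $v^Tx=0$. *)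

theory Defs
  imports "HOL-Analysis.Analysis" "HOL-Library.Multiset"
begin

text \<open>An m-th order n-dimensional real tensor is a function from index lists
 (of length m, over the finite index type 'n) to reals.\<close>

definition sym_tensor :: "nat \<Rightarrow> ('n::finite list \<Rightarrow> real) \<Rightarrow> bool" where
  "sym_tensor m A \<longleftrightarrow> (\<forall>is js. length is = m \<and> mset is = mset js \<longrightarrow> A is = A js)"

definition tvec :: "nat \<Rightarrow> ('n::finite list \<Rightarrow> real) \<Rightarrow> real^'n \<Rightarrow> real^'n" where
  "tvec m A x = (\<chi> i. \<Sum>js\<in>{js::'n list. length js = m - 1}.
       A (i # js) * prod_list (map (\<lambda>j. x $ j) js))"

definition tform :: "nat \<Rightarrow> ('n::finite list \<Rightarrow> real) \<Rightarrow> real^'n \<Rightarrow> real" where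
  "tform m A x = x \<bullet> tvec m A x"

definition pos_def_tensor :: "nat \<Rightarrow> ('n::finite list \<Rightarrow> real) \<Rightarrow> bool" where
  "pos_def_tensor m B \<longleftrightarrow> (\<forall>x. x \<noteq> 0 \<longrightarrow> tform m B x > 0)"

definition lam :: "nat \<Rightarrow> ('n::finite list \<Rightarrow> real) \<Rightarrow> ('n list \<Rightarrow> real) \<Rightarrow> real^'n \<Rightarrow> real" where
  "lam m A B x = tform m A x / tform m B x"

definition grad :: "nat \<Rightarrow> ('n::finite list \<Rightarrow> real) \<Rightarrow> ('n list \<Rightarrow> real) \<Rightarrow> real^'n \<Rightarrow> real^'n" where
  "grad m A B x = (real m / tform m B x) *\<^sub>R (tvec m A x - lam m A B x *\<^sub>R tvec m B x)"

definition nonneg :: "real^'n \<Rightarrow> bool" where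
  "nonneg x \<longleftrightarrow> (\<forall>i. 0 \<le> x $ i)"

definition Omega :: "(real^'n) set" where
  "Omega = {x. x \<bullet> x = 1 \<and> nonneg x}"

definition is_proj_Omega :: "(real^'n \<Rightarrow> real^'n) \<Rightarrow> bool" where
  "is_proj_Omega P \<longleftrightarrow> (\<forall>z. P z \<in> Omega \<and> (\<forall>y\<in>Omega. dist z (P z) \<le> dist z y))"

definition teicp_sol :: "nat \<Rightarrow> ('n::finite list \<Rightarrow> real) \<Rightarrow> ('n list \<Rightarrow> real) \<Rightarrow> real \<Rightarrow> real^'n \<Rightarrow> bool" where
  "teicp_sol m A B l x \<longleftrightarrow> x \<noteq> 0 \<and> nonneg x \<and>
     nonneg (l *\<^sub>R tvec m B x - tvec m A x) \<and> x \<bullet> (l *\<^sub>R tvec m B x - tvec m A x) = 0"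

definition pareto_eigenvalue :: "nat \<Rightarrow> ('n::finite list \<Rightarrow> real) \<Rightarrow> ('n list \<Rightarrow> real) \<Rightarrow> real \<Rightarrow> bool" where
  "pareto_eigenvalue m A B l \<longleftrightarrow> (\<exists>x. teicp_sol m A B l x)"

text \<open>KKT point of max { lam x : x in Omega }.\<close>
definition constrained_stationary :: "nat \<Rightarrow> ('n::finite list \<Rightarrow> real) \<Rightarrow> ('n list \<Rightarrow> real) \<Rightarrow> real^'n \<Rightarrow> bool" where
  "constrained_stationary m A B x \<longleftrightarrow> x \<in> Omega \<and>
     (\<exists>\<mu> v. grad m A B x + (2 * \<mu>) *\<^sub>R x + v = 0 \<and> nonneg v \<and> v \<bullet> x = 0)"

definition spg_d :: "nat \<Rightarrow> ('n::finite list \<Rightarrow> real) \<Rightarrow> ('n list \<Rightarrow> real) \<Rightarrow> (real^'n \<Rightarrow> real^'n) \<Rightarrow> real^'n \<Rightarrow> real \<Rightarrow> real^'n" where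
  "spg_d m A B P x b = P (x + b *\<^sub>R grad m A B x) - x"

text \<open>Armijo test passes for alpha = (1/2)^j (the while loop stops).\<close>
definition armijo_ok :: "nat \<Rightarrow> ('n::finite list \<Rightarrow> real) \<Rightarrow> ('n list \<Rightarrow> real) \<Rightarrow> real \<Rightarrow> real^'n \<Rightarrow> real^'n \<Rightarrow> nat \<Rightarrow> bool" where
  "armijo_ok m A B \<rho> x d j \<longleftrightarrow>
     \<not> (lam m A B (x + ((1/2)^j) *\<^sub>R d) < lam m A B x + \<rho> * (1/2)^j * (grad m A B x \<bullet> d))"

definition spg_alpha :: "nat \<Rightarrow> ('n::finite list \<Rightarrow> real) \<Rightarrow> ('n list \<Rightarrow> real) \<Rightarrow> real \<Rightarrow> real^'n \<Rightarrow> real^'n \<Rightarrow> real" where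
  "spg_alpha m A B \<rho> x d = (1/2) ^ (LEAST j. armijo_ok m A B \<rho> x d j)"

definition spg_beta_next :: "real \<Rightarrow> real \<Rightarrow> real^'n \<Rightarrow> real^'n \<Rightarrow> real" where
  "spg_beta_next bmin bmax s y =
     (if s \<bullet> y \<le> 0 then bmax else max bmin (min bmax ((s \<bullet> s) / (s \<bullet> y))))"

text \<open>(x, beta) is generated by SPG1: the recursion applies as long as no
  d_i (i \<le> k) has vanished, i.e. as long as the algorithm has not stopped.\<close>
definition spg1_run :: "nat \<Rightarrow> ('n::finite list \<Rightarrow> real) \<Rightarrow> ('n list \<Rightarrow> real) \<Rightarrow> (real^'n \<Rightarrow> real^'n)
    \<Rightarrow> real \<Rightarrow> real \<Rightarrow> real \<Rightarrow> (nat \<Rightarrow> real^'n) \<Rightarrow> (nat \<Rightarrow> real) \<Rightarrow> bool" where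
  "spg1_run m A B P \<rho> bmin bmax x \<beta> \<longleftrightarrow>
     x 0 \<in> Omega \<and> \<beta> 0 = 1 / norm (grad m A B (x 0)) \<and>
     (\<forall>k. (\<forall>i\<le>k. spg_d m A B P (x i) (\<beta> i) \<noteq> 0) \<longrightarrow>
        (let d = spg_d m A B P (x k) (\<beta> k) in
          x (Suc k) = x k + spg_alpha m A B \<rho> (x k) d *\<^sub>R d \<and>
          \<beta> (Suc k) = spg_beta_next bmin bmax (x (Suc k) - x k)
                         (grad m A B (x (Suc k)) - grad m A B (x k))))"

end

theory Submission
  imports Defs
begin

text \<open>
  The Rayleigh quotient \<open>lam\<close> is \<open>0\<close>-homogeneous, so its gradient \<open>g\<close> satisfies
  \<open>g(x) \<bullet> x = 0\<close>, and on the unit sphere the Euclidean projection maximises the inner product.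
  Hence a fixed point \<open>x\<close> of the projected gradient step \<open>x \<mapsto> P(x + \<beta> g(x))\<close> with
  \<open>\<beta> > 0\<close> has no positive gradient coordinate, which is exactly the KKT system and, unfolding
  \<open>g\<close>, the TEiCP.
  This settles the stopping case.

  Otherwise SPG1 is a monotone ascent method. All iterates are convex combinations of points of
  the sphere and lie in a compact convex set avoiding \<open>0\<close>, on which \<open>g\<close> is Lipschitz; this
  gives a uniform positive lower bound on the Armijo step sizes. So \<open>lam(x\<^sub>k)\<close> increases to a
  limit and the ascents \<open>g(x\<^sub>k) \<bullet> (z\<^sub>k - x\<^sub>k)\<close> tend to \<open>0\<close>, which in turn forces
  \<open>|x\<^sub>k| \<rightarrow> 1\<close> and \<open>z\<^sub>k - x\<^sub>k \<rightarrow> 0\<close>. Passing to the limit along a subsequence on which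
  also \<open>\<beta>\<^sub>k\<close> converges, every accumulation point is a fixed point of a projected gradient step,
  hence stationary, and the limit of \<open>lam(x\<^sub>k)\<close> is its Pareto eigenvalue.
\<close>

section \<open>Homogeneous forms of symmetric tensors\<close>

definition index_tuples :: "nat \<Rightarrow> 'n::finite list set" where
  "index_tuples k = {js. length js = k}"

definition coord_prod :: "real^'n::finite \<Rightarrow> 'n list \<Rightarrow> real" where
  "coord_prod x js = prod_list (map (\<lambda>j. x $ j) js)"

lemma coord_prod_Nil [simp]: "coord_prod x [] = 1"
  and coord_prod_Cons [simp]: "coord_prod x (a # as) = x $ a * coord_prod x as"
  by (simp_all add: coord_prod_def)

lemma coord_prod_scaleR: "coord_prod (c *\<^sub>R x) js = c ^ length js * coord_prod x js"
  by (induction js) (simp_all add: mult_ac)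

lemma finite_index_tuples [simp]: "finite (index_tuples k :: 'n::finite list set)"
  using finite_lists_length_eq[of "UNIV::'n set" k] unfolding index_tuples_def by simp

lemma sum_index_tuples_Suc:
  fixes f :: "'n::finite list \<Rightarrow> 'b::comm_monoid_add"
  shows "(\<Sum>zs\<in>index_tuples (Suc k). f zs) = (\<Sum>i\<in>UNIV. \<Sum>js\<in>index_tuples k. f (i # js))"
proof -
  have img: "index_tuples (Suc k) = (\<lambda>(i, js). i # js) ` (UNIV \<times> index_tuples k)"
    by (auto simp: index_tuples_def image_iff length_Suc_conv)
  have inj: "inj_on (\<lambda>(i, js). i # js) (UNIV \<times> (index_tuples k :: 'n list set))"
    by (auto simp: inj_on_def)
  show ?thesis
    unfolding img sum.reindex[OF inj]
    by (simp add: sum.cartesian_product[symmetric] prod.case_distrib)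
qed

lemma tvec_eq_sum:
  "tvec m A x = (\<chi> i. \<Sum>js\<in>index_tuples (m - 1). A (i # js) * coord_prod x js)"
  unfolding tvec_def index_tuples_def coord_prod_def by simp

lemma inner_tvec_eq_sum:
  "h \<bullet> tvec (Suc k) A x = (\<Sum>zs\<in>index_tuples (Suc k). A zs * (h $ hd zs * coord_prod x (tl zs)))"
  unfolding tvec_eq_sum inner_vec_def
  by (simp add: sum_index_tuples_Suc sum_distrib_left mult_ac)

lemma tform_eq_sum:
  assumes "m \<noteq> 0"
  shows "tform m A x = (\<Sum>zs\<in>index_tuples m. A zs * coord_prod x zs)"
proof -
  obtain k where "m = Suc k" using assms by (cases m) auto
  then have "tform m A x = (\<Sum>zs\<in>index_tuples m. A zs * (x $ hd zs * coord_prod x (tl zs)))"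
    unfolding tform_def by (simp add: inner_tvec_eq_sum)
  also have "\<dots> = (\<Sum>zs\<in>index_tuples m. A zs * coord_prod x zs)"
    using \<open>m = Suc k\<close> by (intro sum.cong) (auto simp: index_tuples_def length_Suc_conv)
  finally show ?thesis .
qed

lemma coord_prod_has_derivative:
  "((\<lambda>x. coord_prod x zs) has_derivative
     (\<lambda>h. \<Sum>p<length zs. h $ (zs ! p) * coord_prod x (take p zs @ drop (Suc p) zs))) (at x)"
proof (induction zs)
  case Nil
  then show ?case by simp
next
  case (Cons a zs)
  have "((\<lambda>x. x $ a * coord_prod x zs) has_derivative
      (\<lambda>h. x $ a * (\<Sum>p<length zs. h $ (zs ! p) * coord_prod x (take p zs @ drop (Suc p) zs))
           + h $ a * coord_prod x zs)) (at x)"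
    by (rule has_derivative_mult[OF bounded_linear_imp_has_derivative[OF bounded_linear_vec_nth] Cons.IH])
  moreover have "(\<lambda>h. x $ a * (\<Sum>p<length zs. h $ (zs ! p) * coord_prod x (take p zs @ drop (Suc p) zs))
        + h $ a * coord_prod x zs)
     = (\<lambda>h. \<Sum>p<length (a # zs). h $ ((a # zs) ! p)
             * coord_prod x (take p (a # zs) @ drop (Suc p) (a # zs)))"
    by (rule ext, simp only: length_Cons sum.lessThan_Suc_shift)
       (simp add: sum_distrib_left mult_ac coord_prod_def)
  ultimately show ?case by simp
qed

text \<open>The product rule gives one term per index position; by symmetry each of them equals the
  term for the first position.\<close>

lemma sym_tensor_sum_delete_nth:
  assumes sym: "sym_tensor m A" and p: "p < m"
  shows "(\<Sum>zs\<in>index_tuples m. A zs * (h $ (zs ! p) * coord_prod x (take p zs @ drop (Suc p) zs)))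
       = (\<Sum>zs\<in>index_tuples m. A zs * (h $ hd zs * coord_prod x (tl zs)))"
proof (rule sum.reindex_bij_witness[where j = "\<lambda>a. a ! p # (take p a @ drop (Suc p) a)"
      and i = "\<lambda>b. take p (tl b) @ hd b # drop p (tl b)"])
  fix a :: "'a list" assume "a \<in> index_tuples m"
  then have la: "length a = m" by (simp add: index_tuples_def)
  show "take p (tl (a ! p # (take p a @ drop (Suc p) a))) @ hd (a ! p # (take p a @ drop (Suc p) a))
         # drop p (tl (a ! p # (take p a @ drop (Suc p) a))) = a"
    using p la by (simp add: id_take_nth_drop[symmetric] min_def)
  show "a ! p # (take p a @ drop (Suc p) a) \<in> index_tuples m"
    using p la by (simp add: index_tuples_def)
  have "mset (a ! p # (take p a @ drop (Suc p) a)) = mset a"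
    using p la id_take_nth_drop[of p a]
    by (metis add_mset_add_single mset.simps(2) mset_append union_mset_add_mset_right)
  then have "A (a ! p # (take p a @ drop (Suc p) a)) = A a"
    using sym la unfolding sym_tensor_def by (metis length_Cons size_mset)
  then show "A (a ! p # (take p a @ drop (Suc p) a)) * (h $ hd (a ! p # (take p a @ drop (Suc p) a))
      * coord_prod x (tl (a ! p # (take p a @ drop (Suc p) a))))
    = A a * (h $ (a ! p) * coord_prod x (take p a @ drop (Suc p) a))"
    by simp
next
  fix b :: "'a list" assume "b \<in> index_tuples m"
  then obtain c cs where bc: "b = c # cs" "length cs = m - 1"
    using p unfolding index_tuples_def by (cases b) auto
  then show "take p (tl b) @ hd b # drop p (tl b) \<in> index_tuples m"
    using p by (simp add: index_tuples_def)
  show "(take p (tl b) @ hd b # drop p (tl b)) ! p # (take p (take p (tl b) @ hd b # drop p (tl b))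
        @ drop (Suc p) (take p (tl b) @ hd b # drop p (tl b))) = b"
    using bc p by (simp add: nth_append min_def)
qed

lemma tform_has_derivative:
  assumes sym: "sym_tensor m A" and m: "m \<noteq> 0"
  shows "(tform m A has_derivative (\<lambda>h. real m * (h \<bullet> tvec m A x))) (at x)"
proof -
  obtain k where mk: "m = Suc k" using m by (cases m) auto
  let ?D = "\<lambda>zs h. \<Sum>p<length zs. h $ (zs ! p) * coord_prod x (take p zs @ drop (Suc p) zs)"
  have "((\<lambda>x. \<Sum>zs\<in>index_tuples m. A zs * coord_prod x zs) has_derivative
          (\<lambda>h. \<Sum>zs\<in>index_tuples m. A zs * ?D zs h)) (at x)"
    by (intro has_derivative_sum has_derivative_mult_right coord_prod_has_derivative)
  moreover have "(\<Sum>zs\<in>index_tuples m. A zs * ?D zs h) = real m * (h \<bullet> tvec m A x)" for h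
  proof -
    have "(\<Sum>zs\<in>index_tuples m. A zs * ?D zs h)
        = (\<Sum>p<m. \<Sum>zs\<in>index_tuples m. A zs * (h $ (zs ! p) * coord_prod x (take p zs @ drop (Suc p) zs)))"
      by (subst sum.swap[symmetric], rule sum.cong) (auto simp: index_tuples_def sum_distrib_left)
    also have "\<dots> = (\<Sum>p<m. \<Sum>zs\<in>index_tuples m. A zs * (h $ hd zs * coord_prod x (tl zs)))"
      by (rule sum.cong[OF refl]) (simp add: sym_tensor_sum_delete_nth[OF sym])
    finally show ?thesis
      by (simp add: mk inner_tvec_eq_sum)
  qed
  moreover have "tform m A = (\<lambda>x. \<Sum>zs\<in>index_tuples m. A zs * coord_prod x zs)"
    using tform_eq_sum[OF m] by (rule ext)
  ultimately show ?thesis by simp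
qed

lemma tvec_scaleR: "tvec m A (c *\<^sub>R x) = c ^ (m - 1) *\<^sub>R tvec m A x"
proof -
  have "(\<Sum>js\<in>index_tuples (m - 1). A (i # js) * coord_prod (c *\<^sub>R x) js)
      = c ^ (m - 1) * (\<Sum>js\<in>index_tuples (m - 1). A (i # js) * coord_prod x js)" for i
    by (simp add: sum_distrib_left, rule sum.cong) (auto simp: index_tuples_def coord_prod_scaleR)
  then show ?thesis unfolding tvec_eq_sum by (simp add: vec_eq_iff)
qed

lemma tform_scaleR: "m \<noteq> 0 \<Longrightarrow> tform m A (c *\<^sub>R x) = c ^ m * tform m A x"
  unfolding tform_def tvec_scaleR by (cases m) auto

lemma pos_def_tensor_order_nonzero:
  assumes "pos_def_tensor m B" shows "m \<noteq> 0"
proof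
  assume "m = 0"
  obtain i :: 'a where True by simp
  let ?x = "axis i (1::real) :: real^'a"
  have "tform m B ((-1) *\<^sub>R ?x) = - tform m B ?x"
    unfolding tform_def tvec_scaleR \<open>m = 0\<close> by simp
  moreover have "?x \<noteq> 0" by (simp add: axis_eq_0_iff)
  then have "tform m B ((-1) *\<^sub>R ?x) > 0" "tform m B ?x > 0"
    using assms unfolding pos_def_tensor_def by auto
  ultimately show False by simp
qed

lemma lam_scaleR: "m \<noteq> 0 \<Longrightarrow> c \<noteq> 0 \<Longrightarrow> lam m A B (c *\<^sub>R x) = lam m A B x"
  unfolding lam_def by (simp add: tform_scaleR)

lemma grad_scaleR:
  assumes "m \<noteq> 0" "c \<noteq> 0"
  shows "grad m A B (c *\<^sub>R x) = (1 / c) *\<^sub>R grad m A B x"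
proof -
  obtain k where mk: "m = Suc k" using assms by (cases m) auto
  let ?t = "tform m B x" and ?l = "lam m A B x" and ?a = "tvec m A x" and ?b = "tvec m B x"
  have "grad m A B (c *\<^sub>R x)
      = (real (Suc k) / (c ^ Suc k * ?t)) *\<^sub>R (c ^ k *\<^sub>R ?a - ?l *\<^sub>R (c ^ k *\<^sub>R ?b))"
    unfolding grad_def lam_scaleR[OF assms] using assms by (simp add: tform_scaleR tvec_scaleR mk)
  also have "\<dots> = (real (Suc k) / (c ^ Suc k * ?t) * c ^ k) *\<^sub>R (?a - ?l *\<^sub>R ?b)"
    by (simp add: algebra_simps)
  also have "real (Suc k) / (c ^ Suc k * ?t) * c ^ k = (1 / c) * (real (Suc k) / ?t)"
    using assms by (cases "?t = 0") (simp_all add: field_simps)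
  finally show ?thesis unfolding grad_def mk by simp
qed

lemma inner_grad_self: "grad m A B x \<bullet> x = 0"
proof -
  have "x \<bullet> grad m A B x = 0"
    unfolding grad_def lam_def
    by (cases "tform m B x = 0") (simp_all add: inner_diff_right tform_def[symmetric] inner_commute)
  then show ?thesis by (simp add: inner_commute)
qed

lemma tform_pos: "pos_def_tensor m B \<Longrightarrow> x \<noteq> 0 \<Longrightarrow> tform m B x > 0"
  unfolding pos_def_tensor_def by auto

lemma lam_line_has_real_derivative:
  assumes sA: "sym_tensor m A" and sB: "sym_tensor m B" and pd: "pos_def_tensor m B"
    and nz: "u + t *\<^sub>R e \<noteq> 0"
  shows "((\<lambda>t. lam m A B (u + t *\<^sub>R e)) has_real_derivative grad m A B (u + t *\<^sub>R e) \<bullet> e) (at t)"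
proof -
  have m: "m \<noteq> 0" by (rule pos_def_tensor_order_nonzero[OF pd])
  let ?p = "u + t *\<^sub>R e"
  have line: "((\<lambda>t. u + t *\<^sub>R e) has_derivative (\<lambda>s. s *\<^sub>R e)) (at t)"
    by (auto intro!: derivative_eq_intros)
  have form_deriv: "((\<lambda>t. tform m C (u + t *\<^sub>R e)) has_real_derivative real m * (e \<bullet> tvec m C ?p)) (at t)"
    if "sym_tensor m C" for C
    unfolding has_field_derivative_def
    by (rule has_derivative_eq_rhs[OF has_derivative_compose[OF line tform_has_derivative[OF that m]]])
       (simp add: fun_eq_iff mult_ac)
  have pos: "tform m B ?p > 0" by (rule tform_pos[OF pd nz])
  have "((\<lambda>t. tform m A (u + t *\<^sub>R e) / tform m B (u + t *\<^sub>R e)) has_real_derivative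
      (real m * (e \<bullet> tvec m A ?p) * tform m B ?p - tform m A ?p * (real m * (e \<bullet> tvec m B ?p)))
        / (tform m B ?p * tform m B ?p)) (at t)"
    using pos by (intro DERIV_divide form_deriv sA sB) simp
  moreover have "(real m * (e \<bullet> tvec m A ?p) * tform m B ?p - tform m A ?p * (real m * (e \<bullet> tvec m B ?p)))
        / (tform m B ?p * tform m B ?p) = grad m A B ?p \<bullet> e"
    unfolding grad_def lam_def using pos by (simp add: inner_diff_right inner_commute field_simps)
  ultimately show ?thesis unfolding lam_def by simp
qed

section \<open>Bounded Lipschitz functions\<close>

definition bounded_lipschitz_on :: "'a::metric_space set \<Rightarrow> ('a \<Rightarrow> 'b::real_normed_vector) \<Rightarrow> bool" where
  "bounded_lipschitz_on S f \<longleftrightarrow> bounded (f ` S) \<and> (\<exists>L. L-lipschitz_on S f)"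

lemma bounded_lipschitz_onE:
  assumes "bounded_lipschitz_on S f"
  obtains L M where "L-lipschitz_on S f" "0 \<le> M" "\<And>x. x \<in> S \<Longrightarrow> norm (f x) \<le> M"
  using assms unfolding bounded_lipschitz_on_def bounded_pos by (metis image_eqI less_imp_le)

lemma bounded_lipschitz_onI:
  assumes "L-lipschitz_on S f" "\<And>x. x \<in> S \<Longrightarrow> norm (f x) \<le> M"
  shows "bounded_lipschitz_on S f"
  using assms unfolding bounded_lipschitz_on_def bounded_iff by blast

lemma bounded_lipschitz_on_const: "bounded_lipschitz_on S (\<lambda>x. c)"
  using bounded_lipschitz_onI[OF lipschitz_on_constant, of S c "norm c"] by simp

lemma bounded_lipschitz_on_add:
  "bounded_lipschitz_on S f \<Longrightarrow> bounded_lipschitz_on S g \<Longrightarrow> bounded_lipschitz_on S (\<lambda>x. f x + g x)"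
  unfolding bounded_lipschitz_on_def by (metis bounded_plus_comp lipschitz_on_add)

lemma bounded_lipschitz_on_diff:
  "bounded_lipschitz_on S f \<Longrightarrow> bounded_lipschitz_on S g \<Longrightarrow> bounded_lipschitz_on S (\<lambda>x. f x - g x)"
  unfolding bounded_lipschitz_on_def by (metis bounded_minus_comp lipschitz_on_diff)

lemma bounded_lipschitz_on_sum:
  "finite I \<Longrightarrow> (\<And>i. i \<in> I \<Longrightarrow> bounded_lipschitz_on S (f i)) \<Longrightarrow>
    bounded_lipschitz_on S (\<lambda>x. \<Sum>i\<in>I. f i x)"
  by (induction I rule: finite_induct) (simp_all add: bounded_lipschitz_on_const bounded_lipschitz_on_add)

text \<open>Products need the boundedness: \<open>|fg(x) - fg(y)| \<le> |f(x)| |g(x) - g(y)| + |f(x) - f(y)| |g(y)|\<close>.\<close>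

lemma bounded_lipschitz_on_bilinear:
  fixes prod :: "'b::real_normed_vector \<Rightarrow> 'c::real_normed_vector \<Rightarrow> 'd::real_normed_vector"
  assumes bl: "bounded_bilinear prod"
    and f: "bounded_lipschitz_on S f" and g: "bounded_lipschitz_on S g"
  shows "bounded_lipschitz_on S (\<lambda>x. prod (f x) (g x))"
proof -
  interpret bounded_bilinear prod by (rule bl)
  obtain C where C: "C > 0" "\<And>a b. norm (prod a b) \<le> norm a * norm b * C"
    using pos_bounded by blast
  obtain K1 M1 where K1: "K1-lipschitz_on S f" and M1: "0 \<le> M1" "\<And>x. x \<in> S \<Longrightarrow> norm (f x) \<le> M1"
    using bounded_lipschitz_onE[OF f] by blast
  obtain K2 M2 where K2: "K2-lipschitz_on S g" and M2: "0 \<le> M2" "\<And>x. x \<in> S \<Longrightarrow> norm (g x) \<le> M2"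
    using bounded_lipschitz_onE[OF g] by blast
  have K: "0 \<le> K1" "0 \<le> K2" using K1 K2 lipschitz_on_nonneg by blast+
  show ?thesis
  proof (rule bounded_lipschitz_onI[of "C * (M1 * K2 + K1 * M2)"])
    show "(C * (M1 * K2 + K1 * M2))-lipschitz_on S (\<lambda>x. prod (f x) (g x))"
    proof (rule lipschitz_onI)
      fix x y assume xy: "x \<in> S" "y \<in> S"
      have "norm (prod (f x) (g x - g y)) \<le> norm (f x) * norm (g x - g y) * C" by (rule C(2))
      also have "\<dots> \<le> M1 * (K2 * dist x y) * C"
        using M1(2)[OF xy(1)] lipschitz_onD[OF K2 xy] C(1) M1(1)
        by (intro mult_right_mono mult_mono) (auto simp: dist_norm)
      finally have a: "norm (prod (f x) (g x - g y)) \<le> M1 * (K2 * dist x y) * C" .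
      have "norm (prod (f x - f y) (g y)) \<le> norm (f x - f y) * norm (g y) * C" by (rule C(2))
      also have "\<dots> \<le> (K1 * dist x y) * M2 * C"
        using lipschitz_onD[OF K1 xy] M2(2)[OF xy(2)] C(1) K
        by (intro mult_right_mono mult_mono) (auto simp: dist_norm)
      finally have b: "norm (prod (f x - f y) (g y)) \<le> (K1 * dist x y) * M2 * C" .
      have "prod (f x) (g x) - prod (f y) (g y) = prod (f x) (g x - g y) + prod (f x - f y) (g y)"
        by (simp add: diff_right diff_left)
      then show "dist (prod (f x) (g x)) (prod (f y) (g y)) \<le> C * (M1 * K2 + K1 * M2) * dist x y"
        using norm_triangle_le[OF add_mono[OF a b]] by (simp add: dist_norm algebra_simps)
    qed (use C K M1 M2 in auto)
  next
    fix x assume x: "x \<in> S"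
    have "norm (prod (f x) (g x)) \<le> norm (f x) * norm (g x) * C" by (rule C(2))
    also have "\<dots> \<le> M1 * M2 * C"
      using M1(2)[OF x] M2(2)[OF x] C(1) M1(1) by (intro mult_right_mono mult_mono) auto
    finally show "norm (prod (f x) (g x)) \<le> M1 * M2 * C" .
  qed
qed

lemmas bounded_lipschitz_on_mult = bounded_lipschitz_on_bilinear[OF bounded_bilinear_mult]
lemmas bounded_lipschitz_on_scaleR = bounded_lipschitz_on_bilinear[OF bounded_bilinear_scaleR]
lemmas bounded_lipschitz_on_inner = bounded_lipschitz_on_bilinear[OF bounded_bilinear_inner]

lemma bounded_lipschitz_on_inverse:
  fixes f :: "'a::metric_space \<Rightarrow> real"
  assumes f: "bounded_lipschitz_on S f" and c: "c > 0" "\<And>x. x \<in> S \<Longrightarrow> c \<le> \<bar>f x\<bar>"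
  shows "bounded_lipschitz_on S (\<lambda>x. inverse (f x))"
proof -
  obtain K where K: "K-lipschitz_on S f" using f unfolding bounded_lipschitz_on_def by blast
  have "(K / c^2)-lipschitz_on S (\<lambda>x. inverse (f x))"
  proof (rule lipschitz_onI)
    fix x y assume xy: "x \<in> S" "y \<in> S"
    have fx: "c \<le> \<bar>f x\<bar>" and fy: "c \<le> \<bar>f y\<bar>" using c xy by auto
    then have "f x \<noteq> 0" "f y \<noteq> 0" using c by auto
    then have "\<bar>inverse (f x) - inverse (f y)\<bar> = \<bar>f y - f x\<bar> / (\<bar>f x\<bar> * \<bar>f y\<bar>)"
      by (simp add: inverse_diff_inverse abs_mult divide_inverse mult_ac abs_inverse)
    also have "\<dots> \<le> (K * dist x y) / c^2"
    proof (rule frac_le)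
      show "\<bar>f y - f x\<bar> \<le> K * dist x y"
        using lipschitz_onD[OF K xy] by (simp add: dist_real_def abs_minus_commute)
      show "c^2 \<le> \<bar>f x\<bar> * \<bar>f y\<bar>"
        using fx fy c unfolding power2_eq_square by (intro mult_mono) auto
    qed (use c lipschitz_on_nonneg[OF K] in auto)
    finally show "dist (inverse (f x)) (inverse (f y)) \<le> K / c^2 * dist x y"
      by (simp add: dist_real_def)
  qed (use c lipschitz_on_nonneg[OF K] in auto)
  moreover have "norm (inverse (f x)) \<le> 1 / c" if "x \<in> S" for x
    using c(1) c(2)[OF that] by (simp add: abs_inverse divide_inverse le_imp_inverse_le)
  ultimately show ?thesis by (rule bounded_lipschitz_onI)
qed

lemma bounded_lipschitz_on_id:
  "bounded S \<Longrightarrow> bounded_lipschitz_on S (\<lambda>x. x)"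
  unfolding bounded_lipschitz_on_def using lipschitz_on_id by auto

lemma bounded_lipschitz_on_component:
  fixes S :: "(real^'n) set"
  assumes "bounded S" shows "bounded_lipschitz_on S (\<lambda>x. x $ j)"
proof -
  have "1-lipschitz_on S (\<lambda>x. x $ j)"
    by (rule lipschitz_onI) (auto simp: dist_norm intro: order_trans[OF _ component_le_norm_cart])
  then show ?thesis
    unfolding bounded_lipschitz_on_def using bounded_component_cart[OF assms] by blast
qed

lemma bounded_lipschitz_on_vec:
  fixes f :: "'a::metric_space \<Rightarrow> real^'m"
  assumes "\<And>i. bounded_lipschitz_on S (\<lambda>x. f x $ i)"
  shows "bounded_lipschitz_on S f"
proof -
  have "bounded_lipschitz_on S (\<lambda>x. \<Sum>i\<in>UNIV. (f x $ i) *\<^sub>R axis i (1::real))"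
    by (intro bounded_lipschitz_on_sum bounded_lipschitz_on_scaleR assms bounded_lipschitz_on_const) auto
  moreover have "(\<lambda>x. \<Sum>i\<in>UNIV. (f x $ i) *\<^sub>R axis i (1::real)) = f"
    by (rule ext) (simp add: vec_eq_iff axis_def if_distrib cong: if_cong)
  ultimately show ?thesis by simp
qed

lemma bounded_lipschitz_on_continuous_on: "bounded_lipschitz_on S f \<Longrightarrow> continuous_on S f"
  unfolding bounded_lipschitz_on_def using lipschitz_on_continuous_on by blast

lemma bounded_lipschitz_on_coord_prod: "bounded S \<Longrightarrow> bounded_lipschitz_on S (\<lambda>x. coord_prod x js)"
  by (induction js)
    (simp_all add: bounded_lipschitz_on_const bounded_lipschitz_on_mult bounded_lipschitz_on_component)

lemma bounded_lipschitz_on_tvec: "bounded S \<Longrightarrow> bounded_lipschitz_on S (tvec m A)"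
  unfolding tvec_eq_sum
  by (rule bounded_lipschitz_on_vec) (simp, intro bounded_lipschitz_on_sum bounded_lipschitz_on_mult
      bounded_lipschitz_on_const bounded_lipschitz_on_coord_prod, auto)

lemma bounded_lipschitz_on_tform: "bounded S \<Longrightarrow> bounded_lipschitz_on S (tform m A)"
  unfolding tform_def[abs_def]
  by (intro bounded_lipschitz_on_inner bounded_lipschitz_on_id bounded_lipschitz_on_tvec)

section \<open>A compact convex neighbourhood of the feasible set\<close>

lemma norm_Omega: "z \<in> Omega \<Longrightarrow> norm z = 1"
  unfolding Omega_def by (simp add: norm_eq_sqrt_inner)

lemma axis_in_Omega: "axis i 1 \<in> Omega"
  unfolding Omega_def nonneg_def by (auto simp: inner_axis_axis) (auto simp: axis_def)

lemma normalized_in_Omega: "nonneg x \<Longrightarrow> x \<noteq> 0 \<Longrightarrow> (1 / norm x) *\<^sub>R x \<in> Omega"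
  unfolding Omega_def nonneg_def
  by (simp add: power2_norm_eq_inner[symmetric] power2_eq_square)

text \<open>The iterates of SPG1 are convex combinations of points of \<open>Omega\<close>, so they stay in
  \<open>Omega_cap\<close>; the constraint on the coordinate sum keeps this compact convex set away from \<open>0\<close>,
  where \<open>lam\<close> is singular.\<close>

definition Omega_cap :: "(real^'n) set" where
  "Omega_cap = {x. nonneg x \<and> 1 \<le> (\<Sum>i\<in>UNIV. x $ i) \<and> norm x \<le> 1}"

lemma bounded_Omega_cap: "bounded Omega_cap"
  unfolding bounded_iff Omega_cap_def by auto

lemma closed_Omega_cap: "closed (Omega_cap :: (real^'n) set)"
proof -
  have "closed {x::real^'n. 0 \<le> x $ i}" for i
    by (intro closed_Collect_le continuous_intros)
  moreover have "closed {x::real^'n. 1 \<le> (\<Sum>i\<in>UNIV. x $ i)}" "closed {x::real^'n. norm x \<le> 1}"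
    by (intro closed_Collect_le continuous_intros)+
  ultimately have "closed ((\<Inter>i. {x::real^'n. 0 \<le> x $ i}) \<inter> {x. 1 \<le> (\<Sum>i\<in>UNIV. x $ i)}
      \<inter> {x. norm x \<le> 1})"
    by (intro closed_Int closed_INT) auto
  moreover have "Omega_cap = (\<Inter>i. {x::real^'n. 0 \<le> x $ i}) \<inter> {x. 1 \<le> (\<Sum>i\<in>UNIV. x $ i)}
      \<inter> {x. norm x \<le> 1}"
    unfolding Omega_cap_def nonneg_def by auto
  ultimately show ?thesis by simp
qed

lemma compact_Omega_cap: "compact Omega_cap"
  using bounded_Omega_cap closed_Omega_cap by (simp add: compact_eq_bounded_closed)

lemma convex_Omega_cap: "convex Omega_cap"
proof (rule convexI)
  fix x y :: "real^'n" and u v :: real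
  assume x: "x \<in> Omega_cap" and y: "y \<in> Omega_cap" and uv: "0 \<le> u" "0 \<le> v" "u + v = 1"
  have "nonneg (u *\<^sub>R x + v *\<^sub>R y)" using x y uv unfolding Omega_cap_def nonneg_def by auto
  moreover have "u * 1 + v * 1 \<le> u * (\<Sum>i\<in>UNIV. x $ i) + v * (\<Sum>i\<in>UNIV. y $ i)"
    using x y uv unfolding Omega_cap_def by (intro add_mono mult_left_mono) auto
  moreover have "norm (u *\<^sub>R x + v *\<^sub>R y) \<le> u * norm x + v * norm y"
    using uv by (metis abs_of_nonneg norm_scaleR norm_triangle_ineq)
  moreover have "u * norm x + v * norm y \<le> u * 1 + v * 1"
    using x y uv unfolding Omega_cap_def by (intro add_mono mult_left_mono) auto
  ultimately show "u *\<^sub>R x + v *\<^sub>R y \<in> Omega_cap"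
    using uv unfolding Omega_cap_def by (auto simp: sum.distrib sum_distrib_left)
qed

lemma Omega_subset_Omega_cap: "Omega \<subseteq> Omega_cap"
proof
  fix z :: "real^'n" assume z: "z \<in> Omega"
  then have nn: "nonneg z" and zz: "(\<Sum>i\<in>UNIV. z $ i * z $ i) = 1"
    unfolding Omega_def by (auto simp: inner_vec_def)
  have "z $ i * z $ i \<le> z $ i" for i
    using component_le_norm_cart[of z i] norm_Omega[OF z] nn unfolding nonneg_def
    by (simp add: mult_left_le)
  then have "(\<Sum>i\<in>UNIV. z $ i * z $ i) \<le> (\<Sum>i\<in>UNIV. z $ i)" by (rule sum_mono)
  then show "z \<in> Omega_cap" using nn zz norm_Omega[OF z] unfolding Omega_cap_def by auto
qed

lemma Omega_cap_nonzero: "x \<in> Omega_cap \<Longrightarrow> x \<noteq> 0"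
  unfolding Omega_cap_def by auto

lemma Omega_cap_nonempty: "Omega_cap \<noteq> {}"
  using Omega_subset_Omega_cap axis_in_Omega by blast

lemma continuous_on_Omega_cap_attains_pos_min:
  fixes f :: "real^'n \<Rightarrow> real"
  assumes "continuous_on Omega_cap f" "\<And>x. x \<in> Omega_cap \<Longrightarrow> 0 < f x"
  obtains c where "0 < c" "\<And>x. x \<in> Omega_cap \<Longrightarrow> c \<le> f x"
  using continuous_attains_inf[OF compact_Omega_cap Omega_cap_nonempty assms(1)] assms(2) by blast

lemma bounded_lipschitz_on_lam:
  assumes pd: "pos_def_tensor m B"
  shows "bounded_lipschitz_on Omega_cap (lam m A B)"
proof -
  obtain c where c: "0 < c" "\<And>x. x \<in> Omega_cap \<Longrightarrow> c \<le> tform m B x"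
    using continuous_on_Omega_cap_attains_pos_min[of "tform m B"]
      bounded_lipschitz_on_continuous_on[OF bounded_lipschitz_on_tform[OF bounded_Omega_cap]]
      tform_pos[OF pd Omega_cap_nonzero] by blast
  have "bounded_lipschitz_on Omega_cap (\<lambda>x. tform m A x * inverse (tform m B x))"
    by (intro bounded_lipschitz_on_mult bounded_lipschitz_on_tform
        bounded_lipschitz_on_inverse[OF _ c(1)] bounded_Omega_cap) (use c in force)
  then show ?thesis unfolding lam_def[abs_def] by (simp add: divide_inverse)
qed

lemma bounded_lipschitz_on_grad:
  assumes pd: "pos_def_tensor m B"
  shows "bounded_lipschitz_on Omega_cap (grad m A B)"
proof -
  obtain c where c: "0 < c" "\<And>x. x \<in> Omega_cap \<Longrightarrow> c \<le> tform m B x"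
    using continuous_on_Omega_cap_attains_pos_min[of "tform m B"]
      bounded_lipschitz_on_continuous_on[OF bounded_lipschitz_on_tform[OF bounded_Omega_cap]]
      tform_pos[OF pd Omega_cap_nonzero] by blast
  have "bounded_lipschitz_on Omega_cap
      (\<lambda>x. (real m * inverse (tform m B x)) *\<^sub>R (tvec m A x - lam m A B x *\<^sub>R tvec m B x))"
    by (intro bounded_lipschitz_on_mult bounded_lipschitz_on_scaleR bounded_lipschitz_on_diff
        bounded_lipschitz_on_const bounded_lipschitz_on_tvec bounded_lipschitz_on_lam[OF pd]
        bounded_lipschitz_on_tform bounded_lipschitz_on_inverse[OF _ c(1)] bounded_Omega_cap)
      (use c in force)
  then show ?thesis unfolding grad_def[abs_def] by (simp add: divide_inverse)
qed

section \<open>Projection onto the nonnegative part of the sphere\<close>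

definition Omega_argmax :: "real^'n \<Rightarrow> real^'n \<Rightarrow> bool" where
  "Omega_argmax y z \<longleftrightarrow> z \<in> Omega \<and> (\<forall>w\<in>Omega. y \<bullet> w \<le> y \<bullet> z)"

text \<open>On the unit sphere \<open>|y - w|\<^sup>2 = |y|\<^sup>2 + 1 - 2 y \<bullet> w\<close>, so nearest points maximise \<open>y \<bullet> w\<close>.\<close>

lemma is_proj_Omega_argmax:
  fixes P :: "real^'n \<Rightarrow> real^'n"
  assumes "is_proj_Omega P" shows "Omega_argmax y (P y)"
  unfolding Omega_argmax_def
proof (intro conjI ballI)
  show Py: "P y \<in> Omega" using assms unfolding is_proj_Omega_def by blast
  fix w :: "real^'n" assume w: "w \<in> Omega"
  have "dist y (P y) \<le> dist y w" using assms w unfolding is_proj_Omega_def by blast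
  then have "(dist y (P y))\<^sup>2 \<le> (dist y w)\<^sup>2" by (simp add: power_mono)
  then have "(y - P y) \<bullet> (y - P y) \<le> (y - w) \<bullet> (y - w)"
    by (simp add: dist_norm power2_norm_eq_inner)
  moreover have "P y \<bullet> P y = 1" "w \<bullet> w = 1" using Py w unfolding Omega_def by auto
  ultimately show "y \<bullet> w \<le> y \<bullet> P y" by (simp add: inner_diff_left inner_diff_right inner_commute)
qed

lemma Omega_argmax_lower_bound:
  assumes x: "nonneg x" "x \<noteq> 0" and gx: "g \<bullet> x = 0" and z: "Omega_argmax (x + \<beta> *\<^sub>R g) z"
  shows "norm x \<le> x \<bullet> z + \<beta> * (g \<bullet> z)"
proof -
  let ?u = "(1 / norm x) *\<^sub>R x"
  have "(x + \<beta> *\<^sub>R g) \<bullet> ?u = norm x"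
    using x gx by (simp add: inner_add_left power2_norm_eq_inner[symmetric] power2_eq_square)
  moreover have "(x + \<beta> *\<^sub>R g) \<bullet> ?u \<le> (x + \<beta> *\<^sub>R g) \<bullet> z"
    using z normalized_in_Omega[OF x] unfolding Omega_argmax_def by blast
  ultimately show ?thesis by (simp add: inner_add_left)
qed

lemma closed_Omega: "closed (Omega :: (real^'n) set)"
proof -
  have "closed {x::real^'n. x \<bullet> x = 1}"
    by (intro closed_Collect_eq continuous_intros)
  moreover have "closed {x::real^'n. 0 \<le> x $ i}" for i
    by (intro closed_Collect_le continuous_intros)
  ultimately have "closed ({x::real^'n. x \<bullet> x = 1} \<inter> (\<Inter>i. {x. 0 \<le> x $ i}))"
    by (intro closed_Int closed_INT) auto
  moreover have "Omega = {x::real^'n. x \<bullet> x = 1} \<inter> (\<Inter>i. {x. 0 \<le> x $ i})"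
    unfolding Omega_def nonneg_def by auto
  ultimately show ?thesis by simp
qed

lemma is_proj_Omega_idem:
  assumes "is_proj_Omega P" "y \<in> Omega" shows "P y = y"
proof -
  have "dist y (P y) \<le> dist y y" using assms unfolding is_proj_Omega_def by blast
  then show ?thesis by simp
qed

lemma Omega_argmax_limit:
  fixes Y Z :: "nat \<Rightarrow> real^'n"
  assumes Y: "Y \<longlonglongrightarrow> y" and Z: "Z \<longlonglongrightarrow> z" and YZ: "\<And>k. Omega_argmax (Y k) (Z k)"
  shows "Omega_argmax y z"
  unfolding Omega_argmax_def
proof (intro conjI ballI)
  have "Z k \<in> Omega" for k using YZ by (simp add: Omega_argmax_def)
  then show "z \<in> Omega" by (rule closed_sequentially[OF closed_Omega _ Z])
  fix w :: "real^'n" assume "w \<in> Omega"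
  then have "\<forall>k. Y k \<bullet> w \<le> Y k \<bullet> Z k" using YZ by (simp add: Omega_argmax_def)
  then show "y \<bullet> w \<le> y \<bullet> z"
    by (intro LIMSEQ_le[OF tendsto_inner[OF Y tendsto_const] tendsto_inner[OF Y Z]]) simp
qed

text \<open>If \<open>u\<close> is a fixed point of the projected gradient step, then no coordinate of the gradient is
  positive: otherwise moving \<open>u\<close> along that coordinate axis and renormalising would increase the
  objective \<open>(u + \<gamma> g) \<bullet> w\<close>.\<close>

lemma grad_nonpos_of_Omega_argmax_fixed:
  fixes u g :: "real^'n"
  assumes u: "u \<in> Omega" and gam: "\<gamma> > 0" and gu: "g \<bullet> u = 0"
    and mx: "Omega_argmax (u + \<gamma> *\<^sub>R g) u"
  shows "g $ i \<le> 0"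
proof (rule ccontr)
  assume "\<not> g $ i \<le> 0"
  define t where "t = \<gamma> * g $ i"
  have t: "t > 0" using gam \<open>\<not> g $ i \<le> 0\<close> by (simp add: t_def)
  define y where "y = u + \<gamma> *\<^sub>R g"
  define v where "v = u + t *\<^sub>R axis i (1::real)"
  have uu: "u \<bullet> u = 1" and un: "nonneg u" using u unfolding Omega_def by auto
  have yu: "y \<bullet> u = 1" unfolding y_def by (simp add: inner_add_left uu gu)
  have yi: "y $ i = u $ i + t" unfolding y_def t_def by simp
  have "v $ i > 0" using un t unfolding v_def nonneg_def by (simp add: add_nonneg_pos)
  then have nv: "norm v > 0" by auto
  have vv: "v \<bullet> v = 1 + 2 * t * u $ i + t\<^sup>2"
    unfolding v_def using uu
    by (simp add: inner_add_left inner_add_right inner_axis inner_commute power2_eq_square algebra_simps)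
  have yv: "y \<bullet> v = 1 + t * y $ i"
    unfolding v_def using yu by (simp add: inner_add_right inner_axis mult.commute)
  have "nonneg v" using un t unfolding v_def nonneg_def by (auto simp: axis_def)
  then have "(1 / norm v) *\<^sub>R v \<in> Omega" using nv by (intro normalized_in_Omega) auto
  then have "y \<bullet> ((1 / norm v) *\<^sub>R v) \<le> y \<bullet> u" using mx unfolding y_def Omega_argmax_def by blast
  then have "y \<bullet> ((1 / norm v) *\<^sub>R v) \<le> 1" using yu by simp
  then have le: "1 + t * y $ i \<le> norm v" using nv unfolding yv[symmetric] by (simp add: divide_le_eq)
  have "0 \<le> 1 + t * y $ i" using t un unfolding yi nonneg_def by simp
  then have "(1 + t * y $ i)\<^sup>2 \<le> 1 + 2 * t * u $ i + t\<^sup>2"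
    using le by (simp add: power_mono power2_norm_eq_inner[symmetric, of v] vv[symmetric])
  moreover have "(1 + t * y $ i)\<^sup>2 = 1 + 2 * t * u $ i + 2 * t\<^sup>2 + t\<^sup>2 * (y $ i)\<^sup>2"
    unfolding yi by (simp add: power2_eq_square algebra_simps)
  ultimately show False using t by (smt (verit) zero_le_power2 zero_less_power mult_nonneg_nonneg)
qed

lemma teicp_sol_of_grad_nonpos:
  assumes pd: "pos_def_tensor m B" and x: "nonneg x" "x \<noteq> 0"
    and gle: "\<And>i. grad m A B x $ i \<le> 0"
  shows "teicp_sol m A B (lam m A B x) x"
proof -
  have m: "m \<noteq> 0" by (rule pos_def_tensor_order_nonzero[OF pd])
  have pos: "tform m B x > 0" by (rule tform_pos[OF pd x(2)])
  have eq: "lam m A B x *\<^sub>R tvec m B x - tvec m A x = (- tform m B x / real m) *\<^sub>R grad m A B x"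
    unfolding grad_def using pos m by (simp add: algebra_simps)
  have "nonneg (lam m A B x *\<^sub>R tvec m B x - tvec m A x)"
    unfolding eq nonneg_def using gle pos m
    by (auto simp: divide_nonpos_pos mult_nonneg_nonpos less_imp_le)
  moreover have "x \<bullet> (lam m A B x *\<^sub>R tvec m B x - tvec m A x) = 0"
    unfolding lam_def using pos by (simp add: inner_diff_right tform_def[symmetric])
  ultimately show ?thesis unfolding teicp_sol_def using x by simp
qed

lemma constrained_stationary_of_grad_nonpos:
  assumes "x \<in> Omega" "\<And>i. grad m A B x $ i \<le> 0"
  shows "constrained_stationary m A B x"
  unfolding constrained_stationary_def
proof (intro conjI exI)
  show "grad m A B x + (2 * 0) *\<^sub>R x + - grad m A B x = 0" by simp
  show "nonneg (- grad m A B x)" unfolding nonneg_def using assms(2) by simp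
  show "- grad m A B x \<bullet> x = 0" using inner_grad_self[of m A B x] by simp
qed (rule assms(1))

lemma stationary_of_Omega_argmax_fixed:
  assumes pd: "pos_def_tensor m B" and x: "x \<in> Omega" and gam: "\<gamma> > 0"
    and mx: "Omega_argmax (x + \<gamma> *\<^sub>R grad m A B x) x"
  shows "constrained_stationary m A B x \<and> teicp_sol m A B (lam m A B x) x"
proof -
  have gle: "grad m A B x $ i \<le> 0" for i
    by (rule grad_nonpos_of_Omega_argmax_fixed[OF x gam inner_grad_self mx])
  have "nonneg x" "x \<noteq> 0" using x norm_Omega[OF x] unfolding Omega_def by auto
  then show ?thesis
    using constrained_stationary_of_grad_nonpos[OF x gle] teicp_sol_of_grad_nonpos[OF pd _ _ gle] by blast
qed

section \<open>A uniform lower bound for the Armijo step size\<close>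

lemma lam_segment_ascent:
  assumes sA: "sym_tensor m A" and sB: "sym_tensor m B" and pd: "pos_def_tensor m B"
    and K: "K-lipschitz_on Omega_cap (grad m A B)"
    and u: "u \<in> Omega" and z: "z \<in> Omega" and s: "0 < s" "s \<le> 1"
  shows "lam m A B u + s * (grad m A B u \<bullet> (z - u) - K * s * ((z - u) \<bullet> (z - u)))
    \<le> lam m A B (u + s *\<^sub>R (z - u))"
proof -
  let ?g = "grad m A B" and ?e = "z - u"
  have seg: "u + t *\<^sub>R ?e \<in> Omega_cap" if "0 \<le> t" "t \<le> 1" for t
  proof -
    have "u + t *\<^sub>R ?e = (1 - t) *\<^sub>R u + t *\<^sub>R z" by (simp add: algebra_simps)
    moreover have "u \<in> Omega_cap" "z \<in> Omega_cap" using u z Omega_subset_Omega_cap by auto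
    ultimately show ?thesis using that by (simp add: convexD[OF convex_Omega_cap])
  qed
  have "\<exists>\<xi>>0. \<xi> < s \<and> lam m A B (u + s *\<^sub>R ?e) - lam m A B (u + 0 *\<^sub>R ?e) = (s - 0) * (?g (u + \<xi> *\<^sub>R ?e) \<bullet> ?e)"
  proof (rule MVT2[OF s(1)])
    fix t assume "0 \<le> t" "t \<le> s"
    then show "((\<lambda>t. lam m A B (u + t *\<^sub>R ?e)) has_real_derivative ?g (u + t *\<^sub>R ?e) \<bullet> ?e) (at t)"
      using seg s by (intro lam_line_has_real_derivative[OF sA sB pd] Omega_cap_nonzero) auto
  qed
  then obtain \<xi> where xi: "0 < \<xi>" "\<xi> < s"
    and mvt: "lam m A B (u + s *\<^sub>R ?e) - lam m A B u = s * (?g (u + \<xi> *\<^sub>R ?e) \<bullet> ?e)" by auto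
  have "norm (?g (u + \<xi> *\<^sub>R ?e) - ?g u) \<le> K * norm (\<xi> *\<^sub>R ?e)"
    using lipschitz_on_normD[OF K seg, of \<xi> u] xi s u Omega_subset_Omega_cap by auto
  also have "\<dots> \<le> K * (s * norm ?e)"
  proof -
    have "norm (\<xi> *\<^sub>R ?e) \<le> s * norm ?e" using xi by (simp add: mult_right_mono)
    then show ?thesis using lipschitz_on_nonneg[OF K] by (rule mult_left_mono)
  qed
  also have "\<dots> = K * s * norm ?e" by simp
  finally have "norm (?g (u + \<xi> *\<^sub>R ?e) - ?g u) * norm ?e \<le> K * s * norm ?e * norm ?e"
    by (simp add: mult_right_mono)
  then have "\<bar>(?g (u + \<xi> *\<^sub>R ?e) - ?g u) \<bullet> ?e\<bar> \<le> K * s * (?e \<bullet> ?e)"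
    using Cauchy_Schwarz_ineq2[of "?g (u + \<xi> *\<^sub>R ?e) - ?g u" ?e]
    by (simp add: power2_norm_eq_inner[symmetric] power2_eq_square mult.assoc)
  then have "?g u \<bullet> ?e - K * s * (?e \<bullet> ?e) \<le> ?g (u + \<xi> *\<^sub>R ?e) \<bullet> ?e"
    by (simp add: inner_diff_left)
  then show ?thesis using mvt s by (smt (verit) mult_left_mono)
qed

text \<open>Since \<open>lam\<close> is \<open>0\<close>-homogeneous, the iterate \<open>x\<close> may be replaced by its normalisation
  \<open>u \<in> Omega\<close>; the projection property then bounds \<open>|z - u|\<^sup>2\<close> by the ascent \<open>grad u \<bullet> (z - u)\<close>.\<close>

lemma normalized_projection_step:
  fixes x z :: "real^'n"
  assumes m: "m \<noteq> 0" and x: "nonneg x" "x \<noteq> 0"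
    and z: "Omega_argmax (x + \<beta> *\<^sub>R grad m A B x) z"
  defines "u \<equiv> (1 / norm x) *\<^sub>R x"
  shows "(norm x)\<^sup>2 * ((z - u) \<bullet> (z - u)) \<le> 2 * \<beta> * (grad m A B u \<bullet> (z - u))"
    and "grad m A B u \<bullet> (z - u) = norm x * (grad m A B x \<bullet> (z - x))"
proof -
  let ?g = "grad m A B" and ?N = "norm x"
  have N: "?N > 0" using x by simp
  have uO: "u \<in> Omega" and zO: "z \<in> Omega"
    using normalized_in_Omega[OF x] z unfolding u_def Omega_argmax_def by auto
  have x_eq: "x = ?N *\<^sub>R u" unfolding u_def using N by simp
  have gu: "?g u = ?N *\<^sub>R ?g x"
    unfolding u_def using grad_scaleR[OF m, of "1 / ?N" A B x] N by simp
  have "?g u \<bullet> u = 0" "?g x \<bullet> x = 0" by (rule inner_grad_self)+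
  then have G: "?g u \<bullet> (z - u) = ?N * (?g x \<bullet> z)" and gx: "?g x \<bullet> (z - x) = ?g x \<bullet> z"
    unfolding gu by (simp_all add: inner_diff_right)
  then show "?g u \<bullet> (z - u) = ?N * (?g x \<bullet> (z - x))" by simp
  have "u \<bullet> u = 1" "z \<bullet> z = 1" using uO zO unfolding Omega_def by auto
  then have ee: "(z - u) \<bullet> (z - u) = 2 - 2 * (u \<bullet> z)"
    by (simp add: inner_diff_left inner_diff_right inner_commute)
  have "?N \<le> ?N * (u \<bullet> z) + \<beta> * (?g x \<bullet> z)"
    using Omega_argmax_lower_bound[OF x inner_grad_self z] x_eq
    by (metis inner_scaleR_left)
  then have "?N * (?N * ((z - u) \<bullet> (z - u))) \<le> ?N * (2 * \<beta> * (?g x \<bullet> z))"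
    unfolding ee using N by (intro mult_left_mono) (auto simp: algebra_simps)
  then show "?N\<^sup>2 * ((z - u) \<bullet> (z - u)) \<le> 2 * \<beta> * (?g u \<bullet> (z - u))"
    unfolding G by (simp add: power2_eq_square algebra_simps)
qed

lemma armijo_step_size_inequality:
  fixes N N0 c0 K \<rho> \<alpha> :: real
  assumes N: "0 < N0" "N0 \<le> N" "N \<le> 1" and c0: "0 < c0" and K: "0 \<le> K"
    and \<rho>: "0 < \<rho>" "\<rho> < 1" and \<alpha>: "0 < \<alpha>" "\<alpha> \<le> N0 * ((1 - \<rho>) / 2)"
      "\<alpha> \<le> N0 * c0 * ((1 - \<rho>) / 2) / (K + 1)"
  defines "s \<equiv> \<alpha> / ((1 - \<alpha>) * N + \<alpha>)"
  shows "0 < s" "s \<le> 1" "\<rho> * \<alpha> / N \<le> s * (1 - K * s / c0)"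
proof -
  define \<epsilon> where "\<epsilon> = (1 - \<rho>) / 2"
  have eps: "0 < \<epsilon>" "\<epsilon> < 1" "1 - \<epsilon> = \<rho> + \<epsilon>" using \<rho> unfolding \<epsilon>_def by (auto simp: field_simps)
  have "\<alpha> \<le> 1" using \<alpha>(2) N eps unfolding \<epsilon>_def[symmetric] by (smt (verit) mult_le_one)
  define D where "D = (1 - \<alpha>) * N + \<alpha>"
  have "0 \<le> \<alpha> * (1 - N)" "0 < \<alpha> * N" using \<alpha>(1) N by simp_all
  then have D: "N \<le> D" "D \<le> N + \<alpha>" "0 < D" unfolding D_def using N by (auto simp: algebra_simps)
  show s0: "0 < s" unfolding s_def D_def[symmetric] using \<alpha> D by simp
  show "s \<le> 1" unfolding s_def D_def[symmetric] using D \<open>\<alpha> \<le> 1\<close> N by (simp add: divide_le_eq D_def)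
  have s1: "s \<le> \<alpha> / N0"
    unfolding s_def D_def[symmetric] using \<alpha>(1) D N by (intro divide_left_mono) auto
  have s2: "\<alpha> / (N + \<alpha>) \<le> s"
    unfolding s_def D_def[symmetric] using \<alpha>(1) D N by (intro divide_left_mono) auto
  have "K * s / c0 \<le> K * (\<alpha> / N0) / c0"
    using s1 K c0 by (intro divide_right_mono mult_left_mono) auto
  also have "\<dots> \<le> K * ((N0 * c0 * \<epsilon> / (K + 1)) / N0) / c0"
    using \<alpha>(3) K c0 N unfolding \<epsilon>_def by (intro divide_right_mono mult_left_mono) auto
  also have "\<dots> = \<epsilon> * (K / (K + 1))" using N(1) c0 by simp
  also have "\<dots> \<le> \<epsilon>" using K eps(1) by (intro mult_left_le) auto
  finally have "\<alpha> / (N + \<alpha>) * (1 - \<epsilon>) \<le> s * (1 - K * s / c0)"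
    using s2 eps s0 \<alpha>(1) N by (intro mult_mono) auto
  moreover have "\<rho> * \<alpha> / N \<le> \<alpha> / (N + \<alpha>) * (1 - \<epsilon>)"
  proof -
    have "\<alpha> \<le> N * \<epsilon>" using \<alpha>(2) N eps unfolding \<epsilon>_def[symmetric] by (smt (verit) mult_right_mono)
    then have "\<alpha> * \<alpha> \<le> \<alpha> * (N * \<epsilon>)" using \<alpha>(1) by (simp add: mult_left_mono)
    moreover have "\<rho> * (\<alpha> * \<alpha>) \<le> \<alpha> * \<alpha>" using \<rho> by (simp add: mult_left_le_one_le)
    ultimately have "\<rho> * \<alpha> * (N + \<alpha>) \<le> \<alpha> * (1 - \<epsilon>) * N"
      unfolding eps(3) by (simp add: algebra_simps)
    then show ?thesis using N \<alpha>(1) by (simp add: field_simps)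
  qed
  ultimately show "\<rho> * \<alpha> / N \<le> s * (1 - K * s / c0)" by linarith
qed

lemma lam_step_normalized:
  assumes m: "m \<noteq> 0" and x: "x \<noteq> 0" and \<alpha>: "0 < \<alpha>" "\<alpha> \<le> 1"
  defines "u \<equiv> (1 / norm x) *\<^sub>R x"
  shows "lam m A B (x + \<alpha> *\<^sub>R (z - x)) = lam m A B (u + (\<alpha> / ((1 - \<alpha>) * norm x + \<alpha>)) *\<^sub>R (z - u))"
proof -
  define D where "D = (1 - \<alpha>) * norm x + \<alpha>"
  have "0 \<le> (1 - \<alpha>) * norm x" using \<alpha> by simp
  then have D: "D \<noteq> 0" using \<alpha>(1) unfolding D_def by linarith
  have "D * (\<alpha> / D) = \<alpha>" using D by simp
  then have "norm x *\<^sub>R u + \<alpha> *\<^sub>R (z - norm x *\<^sub>R u) = D *\<^sub>R (u + (\<alpha> / D) *\<^sub>R (z - u))"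
    unfolding scaleR_add_right scaleR_scaleR by (simp add: D_def algebra_simps)
  moreover have "norm x *\<^sub>R u = x" unfolding u_def using x by simp
  ultimately have "x + \<alpha> *\<^sub>R (z - x) = D *\<^sub>R (u + (\<alpha> / D) *\<^sub>R (z - u))" by simp
  then have "lam m A B (x + \<alpha> *\<^sub>R (z - x)) = lam m A B (u + (\<alpha> / D) *\<^sub>R (z - u))"
    by (simp add: lam_scaleR[OF m D])
  then show ?thesis unfolding D_def .
qed

lemma armijo_ascent_step:
  assumes sA: "sym_tensor m A" and sB: "sym_tensor m B" and pd: "pos_def_tensor m B"
    and K: "K-lipschitz_on Omega_cap (grad m A B)" and \<rho>: "0 < \<rho>" "\<rho> < 1"
    and x: "x \<in> Omega_cap" and N0: "0 < N0" "N0 \<le> norm x"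
    and \<beta>: "0 < \<beta>" "\<beta> \<le> Bmax" and z: "Omega_argmax (x + \<beta> *\<^sub>R grad m A B x) z"
    and \<alpha>: "0 < \<alpha>" "\<alpha> \<le> N0 * ((1 - \<rho>) / 2)"
      "\<alpha> \<le> N0 * (N0\<^sup>2 / (2 * Bmax)) * ((1 - \<rho>) / 2) / (K + 1)"
  shows "lam m A B x + \<rho> * \<alpha> * (grad m A B x \<bullet> (z - x)) \<le> lam m A B (x + \<alpha> *\<^sub>R (z - x))"
proof -
  have m: "m \<noteq> 0" by (rule pos_def_tensor_order_nonzero[OF pd])
  let ?g = "grad m A B" and ?N = "norm x"
  define u where "u = (1 / ?N) *\<^sub>R x"
  define G where "G = ?g u \<bullet> (z - u)"
  define c0 where "c0 = N0\<^sup>2 / (2 * Bmax)"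
  have c0: "0 < c0" using N0 \<beta> unfolding c0_def by simp
  have xnn: "nonneg x" "x \<noteq> 0" using x Omega_cap_nonzero unfolding Omega_cap_def by auto
  have N: "N0 \<le> ?N" "?N \<le> 1" using N0 x unfolding Omega_cap_def by auto
  have uO: "u \<in> Omega" and zO: "z \<in> Omega"
    using normalized_in_Omega[OF xnn] z unfolding u_def Omega_argmax_def by auto
  have eG: "?N\<^sup>2 * ((z - u) \<bullet> (z - u)) \<le> 2 * \<beta> * G" and G_eq: "G = ?N * (?g x \<bullet> (z - x))"
    using normalized_projection_step[OF m xnn z] unfolding u_def G_def by auto
  have "0 \<le> ?N\<^sup>2 * ((z - u) \<bullet> (z - u))" by simp
  then have "0 \<le> (2 * \<beta>) * G" using eG by linarith
  then have G0: "0 \<le> G" using \<beta>(1) by (simp add: zero_le_mult_iff)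
  have "N0\<^sup>2 * ((z - u) \<bullet> (z - u)) \<le> ?N\<^sup>2 * ((z - u) \<bullet> (z - u))"
    using N N0 by (intro mult_right_mono power_mono) auto
  also have "\<dots> \<le> 2 * Bmax * G" using eG \<beta>(2) G0 by (smt (verit) mult_right_mono)
  finally have Gc: "c0 * ((z - u) \<bullet> (z - u)) \<le> G" unfolding c0_def using \<beta> by (simp add: field_simps)
  have Ks: "K * s * ((z - u) \<bullet> (z - u)) \<le> K * s / c0 * G" if "0 \<le> s" for s
  proof -
    have "K * s / c0 * (c0 * ((z - u) \<bullet> (z - u))) \<le> K * s / c0 * G"
      using Gc c0 lipschitz_on_nonneg[OF K] that by (intro mult_left_mono) auto
    then show ?thesis using c0 by simp
  qed
  define s where "s = \<alpha> / ((1 - \<alpha>) * ?N + \<alpha>)"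
  note s = armijo_step_size_inequality[OF N0(1) N c0 lipschitz_on_nonneg[OF K] \<rho> \<alpha>(1,2)
      \<alpha>(3)[folded c0_def], folded s_def]
  have "N0 * ((1 - \<rho>) / 2) \<le> 1 * 1" using N N0 \<rho> by (intro mult_mono) auto
  then have "\<alpha> \<le> 1" using \<alpha>(2) by simp
  have "s * (G * (1 - K * s / c0)) \<le> s * (G - K * s * ((z - u) \<bullet> (z - u)))"
    using s(1) Ks[of s] by (intro mult_left_mono) (auto simp: algebra_simps)
  moreover have "G * (\<rho> * \<alpha> / ?N) \<le> G * (s * (1 - K * s / c0))"
    using s(3) G0 by (rule mult_left_mono)
  moreover have "G * (\<rho> * \<alpha> / ?N) = \<rho> * \<alpha> * (?g x \<bullet> (z - x))"
    unfolding G_eq using xnn(2) by simp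
  moreover have "lam m A B u + s * (G - K * s * ((z - u) \<bullet> (z - u))) \<le> lam m A B (u + s *\<^sub>R (z - u))"
    unfolding G_def by (rule lam_segment_ascent[OF sA sB pd K uO zO s(1,2)])
  moreover have "lam m A B (x + \<alpha> *\<^sub>R (z - x)) = lam m A B (u + s *\<^sub>R (z - u))"
    unfolding s_def u_def by (rule lam_step_normalized[OF m xnn(2) \<alpha>(1) \<open>\<alpha> \<le> 1\<close>])
  moreover have "lam m A B x = lam m A B u"
    unfolding u_def using xnn(2) by (simp add: lam_scaleR[OF m])
  ultimately show ?thesis by (simp add: mult_ac)
qed

lemma armijo_uniform:
  assumes sA: "sym_tensor m A" and sB: "sym_tensor m B" and pd: "pos_def_tensor m B"
    and \<rho>: "0 < \<rho>" "\<rho> < 1" and Bmax: "0 < Bmax"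
  obtains abar where "0 < abar"
    "\<And>x \<beta> z \<alpha>. x \<in> Omega_cap \<Longrightarrow> 0 < \<beta> \<Longrightarrow> \<beta> \<le> Bmax \<Longrightarrow>
      Omega_argmax (x + \<beta> *\<^sub>R grad m A B x) z \<Longrightarrow> 0 < \<alpha> \<Longrightarrow> \<alpha> \<le> abar \<Longrightarrow>
      lam m A B x + \<rho> * \<alpha> * (grad m A B x \<bullet> (z - x)) \<le> lam m A B (x + \<alpha> *\<^sub>R (z - x))"
proof -
  obtain K where K: "K-lipschitz_on Omega_cap (grad m A B)"
    using bounded_lipschitz_onE[OF bounded_lipschitz_on_grad[OF pd]] by blast
  obtain N0 where N0: "0 < N0" "\<And>x::real^'a. x \<in> Omega_cap \<Longrightarrow> N0 \<le> norm x"
    using continuous_on_Omega_cap_attains_pos_min[of norm] Omega_cap_nonzero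
    by (metis continuous_on_norm_id zero_less_norm_iff)
  define abar where
    "abar = min (N0 * ((1 - \<rho>) / 2)) (N0 * (N0\<^sup>2 / (2 * Bmax)) * ((1 - \<rho>) / 2) / (K + 1))"
  show ?thesis
  proof
    show "0 < abar" unfolding abar_def using N0 Bmax \<rho> lipschitz_on_nonneg[OF K] by simp
    fix x z :: "real^'a" and \<beta> \<alpha> :: real
    assume "x \<in> Omega_cap" "0 < \<beta>" "\<beta> \<le> Bmax" "Omega_argmax (x + \<beta> *\<^sub>R grad m A B x) z"
      "0 < \<alpha>" "\<alpha> \<le> abar"
    then show "lam m A B x + \<rho> * \<alpha> * (grad m A B x \<bullet> (z - x)) \<le> lam m A B (x + \<alpha> *\<^sub>R (z - x))"
      using armijo_ascent_step[OF sA sB pd K \<rho> _ N0(1) N0(2)] unfolding abar_def by simp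
  qed
qed

section \<open>Convergence of SPG1\<close>

lemma contraction_recurrence_tendsto_zero:
  fixes q e :: "nat \<Rightarrow> real"
  assumes q0: "\<And>k. 0 \<le> q k" and qQ: "\<And>k. q k \<le> Q" and c0: "0 \<le> c" and c1: "c < 1"
    and rec: "\<And>k. q (Suc k) \<le> c * q k + e k" and e: "e \<longlonglongrightarrow> 0"
  shows "q \<longlonglongrightarrow> 0"
proof (rule LIMSEQ_I)
  fix r :: real assume r: "0 < r"
  define \<epsilon> where "\<epsilon> = r / 2"
  have eps: "\<epsilon> > 0" using r unfolding \<epsilon>_def by simp
  have "\<epsilon> * (1 - c) > 0" using eps c1 by simp
  then obtain K where K: "\<And>k. k \<ge> K \<Longrightarrow> norm (e k - 0) < \<epsilon> * (1 - c)"
    using LIMSEQ_D[OF e] by blast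
  have claim: "q (K + n) \<le> \<epsilon> + c^n * Q" for n
  proof (induction n)
    case 0 then show ?case using qQ[of K] eps by simp
  next
    case (Suc n)
    have "q (K + Suc n) \<le> c * q (K + n) + e (K + n)" using rec[of "K+n"] by simp
    also have "\<dots> \<le> c * (\<epsilon> + c^n * Q) + \<epsilon> * (1 - c)"
    proof -
      have ek: "e (K+n) < \<epsilon> * (1 - c)" using K[of "K+n"] by simp
      have "c * q (K + n) \<le> c * (\<epsilon> + c^n * Q)" using Suc.IH c0 by (rule mult_left_mono)
      then show ?thesis using ek by linarith
    qed
    also have "\<dots> = \<epsilon> + c^(Suc n) * Q" by (simp add: algebra_simps)
    finally show ?case .
  qed
  have Q0: "0 \<le> Q" using q0[of 0] qQ[of 0] by simp
  have "(\<lambda>n. c^n * Q) \<longlonglongrightarrow> 0 * Q"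
    by (intro tendsto_mult tendsto_const LIMSEQ_power_zero) (use c0 c1 in simp)
  then obtain N1 where N1: "\<And>n. n \<ge> N1 \<Longrightarrow> norm (c^n * Q - 0) < \<epsilon>"
    using LIMSEQ_D[of "\<lambda>n. c^n * Q" 0] eps by auto
  show "\<exists>no. \<forall>n\<ge>no. norm (q n - 0) < r"
  proof (intro exI allI impI)
    fix n assume n: "K + N1 \<le> n"
    define j where "j = n - K"
    have j: "n = K + j" "N1 \<le> j" using n unfolding j_def by auto
    have "q n \<le> \<epsilon> + c^j * Q" using claim[of j] j by simp
    moreover have "c^j * Q < \<epsilon>" using N1[OF j(2)] c0 Q0 by simp
    ultimately show "norm (q n - 0) < r" using q0[of n] unfolding \<epsilon>_def by simp
  qed
qed

lemma spg_beta_next_bounds: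
  "bmin \<le> bmax \<Longrightarrow> bmin \<le> spg_beta_next bmin bmax s y \<and> spg_beta_next bmin bmax s y \<le> bmax"
  unfolding spg_beta_next_def by auto

lemma spg_alpha_bounds: "0 < spg_alpha m A B \<rho> x d" "spg_alpha m A B \<rho> x d \<le> 1"
  unfolding spg_alpha_def by (simp_all add: power_le_one)

locale spg1 =
  fixes m :: nat and A B :: "'n::finite list \<Rightarrow> real" and P :: "real^'n \<Rightarrow> real^'n"
    and \<rho> bmin bmax :: real and x :: "nat \<Rightarrow> real^'n" and \<beta> :: "nat \<Rightarrow> real"
  assumes sym_A: "sym_tensor m A" and sym_B: "sym_tensor m B" and pos_def_B: "pos_def_tensor m B"
    and proj: "is_proj_Omega P" and rho: "0 < \<rho>" "\<rho> < 1" and beta_min: "0 < bmin" "bmin \<le> bmax"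
    and run: "spg1_run m A B P \<rho> bmin bmax x \<beta>"
begin

definition z :: "nat \<Rightarrow> real^'n" where
  "z k = P (x k + \<beta> k *\<^sub>R grad m A B (x k))"

lemma spg_d_eq: "spg_d m A B P (x k) (\<beta> k) = z k - x k"
  unfolding spg_d_def z_def ..

lemma z_argmax: "Omega_argmax (x k + \<beta> k *\<^sub>R grad m A B (x k)) (z k)"
  unfolding z_def by (rule is_proj_Omega_argmax[OF proj])

lemma z_in_Omega: "z k \<in> Omega"
  using z_argmax unfolding Omega_argmax_def by blast

lemma x0_in_Omega: "x 0 \<in> Omega" and beta_0: "\<beta> 0 = 1 / norm (grad m A B (x 0))"
  using run unfolding spg1_run_def by auto

lemma spg1_step:
  assumes "\<forall>i\<le>k. z i \<noteq> x i"
  shows "x (Suc k) = x k + spg_alpha m A B \<rho> (x k) (z k - x k) *\<^sub>R (z k - x k)"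
    and "\<beta> (Suc k) = spg_beta_next bmin bmax (x (Suc k) - x k)
                      (grad m A B (x (Suc k)) - grad m A B (x k))"
  using run assms unfolding spg1_run_def spg_d_eq Let_def by auto

lemma beta_pos_or_grad_zero:
  assumes "\<forall>i<k. z i \<noteq> x i"
  shows "0 < \<beta> k \<or> grad m A B (x k) = 0"
proof (cases k)
  case 0
  then show ?thesis using beta_0 by auto
next
  case (Suc j)
  then have "\<forall>i\<le>j. z i \<noteq> x i" using assms by auto
  then have "bmin \<le> \<beta> k"
    using spg1_step(2) spg_beta_next_bounds[OF beta_min(2)] Suc by metis
  then show ?thesis using beta_min(1) by simp
qed

text \<open>With \<open>\<beta>\<^sub>0 = 1 / |g(x\<^sub>0)|\<close> the step size is \<open>0\<close> when the gradient vanishes (division by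
  zero); then the projection step is trivially fixed, and any positive step size works.\<close>

theorem stopped_teicp_sol:
  assumes "\<forall>i<k. z i \<noteq> x i" "z k = x k"
  shows "teicp_sol m A B (lam m A B (x k)) (x k)"
proof -
  have "\<exists>\<gamma>>0. Omega_argmax (x k + \<gamma> *\<^sub>R grad m A B (x k)) (x k)"
  proof (cases "0 < \<beta> k")
    case True
    then show ?thesis using z_argmax[of k] assms(2) by auto
  next
    case False
    then have "grad m A B (x k) = 0" using beta_pos_or_grad_zero[OF assms(1)] by blast
    then show ?thesis using z_argmax[of k] assms(2) by (intro exI[of _ 1]) simp
  qed
  moreover have "x k \<in> Omega" using z_in_Omega[of k] assms(2) by simp
  ultimately show ?thesis using stationary_of_Omega_argmax_fixed[OF pos_def_B] by blast
qed

end

locale spg1_nonstop = spg1 +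
  assumes nonstop: "\<And>k. spg_d m A B P (x k) (\<beta> k) \<noteq> 0"
begin

lemma z_ne_x: "z k \<noteq> x k"
  using nonstop[of k] by (simp add: spg_d_eq)

definition alpha :: "nat \<Rightarrow> real" where
  "alpha k = spg_alpha m A B \<rho> (x k) (z k - x k)"

lemma x_Suc: "x (Suc k) = x k + alpha k *\<^sub>R (z k - x k)"
  and beta_Suc: "\<beta> (Suc k) = spg_beta_next bmin bmax (x (Suc k) - x k)
                   (grad m A B (x (Suc k)) - grad m A B (x k))"
  using spg1_step[of k] z_ne_x unfolding alpha_def by simp_all

lemma grad_x0_nonzero: "grad m A B (x 0) \<noteq> 0"
proof
  assume "grad m A B (x 0) = 0"
  then have "z 0 = x 0" unfolding z_def using is_proj_Omega_idem[OF proj x0_in_Omega] by simp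
  then show False using z_ne_x by blast
qed

definition beta_lo :: real where "beta_lo = min bmin (\<beta> 0)"
definition beta_hi :: real where "beta_hi = max bmax (\<beta> 0)"

lemma beta_lo_pos: "0 < beta_lo"
  unfolding beta_lo_def using beta_min(1) beta_0 grad_x0_nonzero by simp

lemma beta_bounds: "beta_lo \<le> \<beta> k" "\<beta> k \<le> beta_hi"
proof (atomize (full), cases k)
  case (Suc j)
  then show "beta_lo \<le> \<beta> k \<and> \<beta> k \<le> beta_hi"
    using beta_Suc[of j] spg_beta_next_bounds[OF beta_min(2)] unfolding beta_lo_def beta_hi_def
    by (auto simp: min_le_iff_disj le_max_iff_disj)
qed (simp add: beta_lo_def beta_hi_def)

lemma beta_pos: "0 < \<beta> k"
  using beta_lo_pos beta_bounds(1) by (rule less_le_trans)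

lemma x_in_Omega_cap: "x k \<in> Omega_cap"
proof (induction k)
  case 0
  then show ?case using x0_in_Omega Omega_subset_Omega_cap by auto
next
  case (Suc k)
  have "x (Suc k) = (1 - alpha k) *\<^sub>R x k + alpha k *\<^sub>R z k" unfolding x_Suc by (simp add: algebra_simps)
  moreover have "z k \<in> Omega_cap" using z_in_Omega Omega_subset_Omega_cap by auto
  moreover have "0 \<le> alpha k" "alpha k \<le> 1"
    unfolding alpha_def using spg_alpha_bounds less_imp_le by blast+
  ultimately show ?case using convexD[OF convex_Omega_cap Suc] by simp
qed

lemma x_nonneg: "nonneg (x k)" and x_nonzero: "x k \<noteq> 0"
  using x_in_Omega_cap[of k] Omega_cap_nonzero unfolding Omega_cap_def by auto

lemma armijo_uniformly_terminates: "\<exists>j. \<forall>k. armijo_ok m A B \<rho> (x k) (z k - x k) j"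
proof -
  have "0 < beta_hi" using beta_pos beta_bounds(2) by (rule less_le_trans)
  then obtain abar where "0 < abar" and abar: "\<And>x \<beta> z \<alpha>. x \<in> Omega_cap \<Longrightarrow> 0 < \<beta> \<Longrightarrow> \<beta> \<le> beta_hi \<Longrightarrow>
      Omega_argmax (x + \<beta> *\<^sub>R grad m A B x) z \<Longrightarrow> 0 < \<alpha> \<Longrightarrow> \<alpha> \<le> abar \<Longrightarrow>
      lam m A B x + \<rho> * \<alpha> * (grad m A B x \<bullet> (z - x)) \<le> lam m A B (x + \<alpha> *\<^sub>R (z - x))"
    using armijo_uniform[OF sym_A sym_B pos_def_B rho] by blast
  obtain j where "(1/2::real) ^ j < abar" using real_arch_pow_inv[OF \<open>0 < abar\<close>, of "1/2"] by auto
  then have "armijo_ok m A B \<rho> (x k) (z k - x k) j" for k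
    unfolding armijo_ok_def
    using abar[OF x_in_Omega_cap beta_pos beta_bounds(2) z_argmax, of "(1/2) ^ j"] by (simp add: not_less)
  then show ?thesis by blast
qed

definition ascent :: "nat \<Rightarrow> real" where
  "ascent k = grad m A B (x k) \<bullet> (z k - x k)"

lemma armijo_condition: "lam m A B (x k) + \<rho> * alpha k * ascent k \<le> lam m A B (x (Suc k))"
proof -
  obtain j where "armijo_ok m A B \<rho> (x k) (z k - x k) j" using armijo_uniformly_terminates by blast
  then have "armijo_ok m A B \<rho> (x k) (z k - x k) (LEAST j. armijo_ok m A B \<rho> (x k) (z k - x k) j)"
    by (rule LeastI)
  then show ?thesis unfolding armijo_ok_def x_Suc alpha_def spg_alpha_def ascent_def by simp
qed

definition alpha_inf :: real where "alpha_inf = (INF k. alpha k)"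

lemma alpha_inf_pos: "0 < alpha_inf" and alpha_inf_le: "alpha_inf \<le> alpha k"
proof -
  obtain j where j: "\<And>k. armijo_ok m A B \<rho> (x k) (z k - x k) j"
    using armijo_uniformly_terminates by blast
  have "(1/2) ^ j \<le> alpha k" for k
    unfolding alpha_def spg_alpha_def by (intro power_decreasing Least_le j) auto
  then have "(1/2) ^ j \<le> alpha_inf" unfolding alpha_inf_def by (intro cINF_greatest) auto
  then show "0 < alpha_inf" by (rule less_le_trans[rotated]) simp
  show "alpha_inf \<le> alpha k" unfolding alpha_inf_def
    by (rule cINF_lower) (auto intro!: bdd_belowI[of _ 0] less_imp_le simp: alpha_def spg_alpha_bounds)
qed

lemma alpha_inf_le_one: "alpha_inf \<le> 1"
  using alpha_inf_le[of 0] spg_alpha_bounds(2) unfolding alpha_def by (rule order_trans)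

lemma ascent_eq: "ascent k = grad m A B (x k) \<bullet> z k"
  unfolding ascent_def by (simp add: inner_diff_right inner_grad_self)

lemma norm_le_projection_gain: "norm (x k) \<le> x k \<bullet> z k + \<beta> k * ascent k"
  unfolding ascent_eq by (rule Omega_argmax_lower_bound[OF x_nonneg x_nonzero inner_grad_self z_argmax])

lemma ascent_nonneg: "0 \<le> ascent k"
proof -
  have "x k \<bullet> z k \<le> norm (x k)"
    using norm_cauchy_schwarz[of "x k" "z k"] norm_Omega[OF z_in_Omega] by simp
  then have "0 \<le> \<beta> k * ascent k" using norm_le_projection_gain[of k] by linarith
  then show ?thesis using beta_pos[of k] by (simp add: zero_le_mult_iff)
qed

lemma lam_ascent: "lam m A B (x k) + \<rho> * alpha_inf * ascent k \<le> lam m A B (x (Suc k))"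
proof -
  have "\<rho> * alpha_inf * ascent k \<le> \<rho> * alpha k * ascent k"
    using alpha_inf_le rho(1) ascent_nonneg by (intro mult_right_mono mult_left_mono) auto
  then show ?thesis using armijo_condition[of k] by linarith
qed

lemma lam_incseq: "incseq (\<lambda>k. lam m A B (x k))"
proof (rule incseq_SucI)
  fix k
  have "0 \<le> \<rho> * alpha_inf * ascent k"
    using rho(1) alpha_inf_pos ascent_nonneg by simp
  then show "lam m A B (x k) \<le> lam m A B (x (Suc k))" using lam_ascent[of k] by linarith
qed

lemma lam_convergent: "convergent (\<lambda>k. lam m A B (x k))"
proof -
  obtain L M where M: "\<And>y. y \<in> Omega_cap \<Longrightarrow> norm (lam m A B y) \<le> M"
    using bounded_lipschitz_onE[OF bounded_lipschitz_on_lam[OF pos_def_B]] by blast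
  then have "lam m A B (x k) \<le> M" for k using x_in_Omega_cap[of k] by fastforce
  then show ?thesis using incseq_convergent[OF lam_incseq] by (metis convergent_def)
qed

lemma ascent_tendsto_zero: "ascent \<longlonglongrightarrow> 0"
proof (rule tendsto_sandwich[of "\<lambda>k. 0" _ _ "\<lambda>k. (lam m A B (x (Suc k)) - lam m A B (x k)) / (\<rho> * alpha_inf)"])
  have c: "0 < \<rho> * alpha_inf" using rho(1) alpha_inf_pos by simp
  then show "\<forall>\<^sub>F k in sequentially. ascent k \<le> (lam m A B (x (Suc k)) - lam m A B (x k)) / (\<rho> * alpha_inf)"
    using lam_ascent by (simp add: pos_le_divide_eq mult.commute add.commute le_diff_eq)
  obtain l where l: "(\<lambda>k. lam m A B (x k)) \<longlonglongrightarrow> l" using lam_convergent convergent_def by blast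
  have "(\<lambda>k. (lam m A B (x (Suc k)) - lam m A B (x k)) / (\<rho> * alpha_inf)) \<longlonglongrightarrow> (l - l) / (\<rho> * alpha_inf)"
    using c by (intro tendsto_divide tendsto_diff LIMSEQ_Suc[OF l] l tendsto_const) auto
  then show "(\<lambda>k. (lam m A B (x (Suc k)) - lam m A B (x k)) / (\<rho> * alpha_inf)) \<longlonglongrightarrow> 0" by simp
qed (simp_all add: ascent_nonneg)

text \<open>The sphere is not convex, so the iterates leave it; the gap \<open>1 - |x\<^sub>k|\<close> contracts by the
  factor \<open>1 - alpha_inf\<close> in each step, up to an error controlled by the ascent.\<close>

lemma norm_gap_recurrence:
  "1 - norm (x (Suc k)) \<le> (1 - alpha_inf) * (1 - norm (x k)) + beta_hi * ascent k"
proof -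
  let ?a = "alpha k" and ?N = "norm (x k)"
  have a: "0 < ?a" "?a \<le> 1" unfolding alpha_def by (rule spg_alpha_bounds)+
  have N: "?N \<le> 1" using x_in_Omega_cap[of k] unfolding Omega_cap_def by simp
  have "z k \<bullet> z k = 1" using z_in_Omega[of k] unfolding Omega_def by simp
  then have "x (Suc k) \<bullet> z k = (1 - ?a) * (x k \<bullet> z k) + ?a"
    unfolding x_Suc by (simp add: inner_add_left inner_diff_left algebra_simps)
  moreover have "x (Suc k) \<bullet> z k \<le> norm (x (Suc k))"
    using norm_cauchy_schwarz[of "x (Suc k)" "z k"] norm_Omega[OF z_in_Omega] by simp
  moreover have "(1 - ?a) * (?N - \<beta> k * ascent k) \<le> (1 - ?a) * (x k \<bullet> z k)"
    using norm_le_projection_gain[of k] a by (intro mult_left_mono) auto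
  moreover have "(1 - ?a) * (1 - ?N) \<le> (1 - alpha_inf) * (1 - ?N)"
    using alpha_inf_le[of k] N by (intro mult_right_mono) auto
  moreover have "(1 - ?a) * (\<beta> k * ascent k) \<le> beta_hi * ascent k"
  proof -
    have "(1 - ?a) * (\<beta> k * ascent k) \<le> 1 * (\<beta> k * ascent k)"
      using a beta_pos[of k] ascent_nonneg[of k] by (intro mult_right_mono) auto
    also have "\<dots> \<le> beta_hi * ascent k" using beta_bounds(2) ascent_nonneg by (simp add: mult_right_mono)
    finally show ?thesis .
  qed
  ultimately show ?thesis by (simp add: algebra_simps)
qed

lemma norm_x_tendsto_one: "(\<lambda>k. norm (x k)) \<longlonglongrightarrow> 1"
proof -
  have "(\<lambda>k. 1 - norm (x k)) \<longlonglongrightarrow> 0"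
  proof (rule contraction_recurrence_tendsto_zero[where q = "\<lambda>k. 1 - norm (x k)"])
    show "1 - norm (x (Suc k)) \<le> (1 - alpha_inf) * (1 - norm (x k)) + beta_hi * ascent k" for k
      by (rule norm_gap_recurrence)
    show "0 \<le> 1 - norm (x k)" "1 - norm (x k) \<le> 1" for k
      using x_in_Omega_cap[of k] unfolding Omega_cap_def by auto
    show "0 \<le> 1 - alpha_inf" "1 - alpha_inf < 1" using alpha_inf_pos alpha_inf_le_one by auto
    show "(\<lambda>k. beta_hi * ascent k) \<longlonglongrightarrow> 0"
      using tendsto_mult_right_zero[OF ascent_tendsto_zero] by simp
  qed
  then have "(\<lambda>k. 1 - (1 - norm (x k))) \<longlonglongrightarrow> 1 - 0" by (intro tendsto_diff tendsto_const)
  then show ?thesis by simp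
qed

lemma z_minus_x_tendsto_zero: "(\<lambda>k. z k - x k) \<longlonglongrightarrow> 0"
proof -
  define h where "h k = (1 - norm (x k))\<^sup>2 + 2 * beta_hi * ascent k" for k
  have "h \<longlonglongrightarrow> (1 - 1)\<^sup>2 + 2 * beta_hi * 0" unfolding h_def
    by (intro tendsto_add tendsto_mult tendsto_const tendsto_power tendsto_diff
        norm_x_tendsto_one ascent_tendsto_zero)
  then have h: "(\<lambda>k. sqrt (h k)) \<longlonglongrightarrow> 0" using tendsto_real_sqrt by fastforce
  have "norm (z k - x k) \<le> sqrt (h k)" for k
  proof (rule real_le_rsqrt)
    have "z k \<bullet> z k = 1" using z_in_Omega[of k] unfolding Omega_def by simp
    then have "(norm (z k - x k))\<^sup>2 = 1 - 2 * (x k \<bullet> z k) + (norm (x k))\<^sup>2"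
      by (simp add: power2_norm_eq_inner inner_diff_left inner_diff_right inner_commute)
    also have "\<dots> \<le> (1 - norm (x k))\<^sup>2 + 2 * (\<beta> k * ascent k)"
      using norm_le_projection_gain[of k] by (simp add: power2_eq_square algebra_simps)
    also have "\<dots> \<le> h k"
      unfolding h_def using beta_bounds(2) ascent_nonneg by (simp add: mult_right_mono)
    finally show "(norm (z k - x k))\<^sup>2 \<le> h k" .
  qed
  then have "(\<lambda>k. norm (z k - x k)) \<longlonglongrightarrow> 0"
    by (intro tendsto_sandwich[OF _ _ tendsto_const h]) auto
  then show ?thesis by (simp add: tendsto_norm_zero_iff)
qed

lemma accumulation_point_in_Omega:
  assumes r: "strict_mono r" and xr: "(x \<circ> r) \<longlonglongrightarrow> xs"
  shows "xs \<in> Omega"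
proof -
  have "xs \<in> Omega_cap" using closed_sequentially[OF closed_Omega_cap _ xr] x_in_Omega_cap by simp
  moreover have "(\<lambda>k. norm ((x \<circ> r) k)) \<longlonglongrightarrow> norm xs" by (intro tendsto_norm xr)
  moreover have "(\<lambda>k. norm ((x \<circ> r) k)) \<longlonglongrightarrow> 1"
    using LIMSEQ_subseq_LIMSEQ[OF norm_x_tendsto_one r] by (simp add: o_def)
  ultimately show ?thesis
    using LIMSEQ_unique unfolding Omega_def Omega_cap_def by (force simp: power2_norm_eq_inner[symmetric])
qed

text \<open>Along a further subsequence the step sizes \<open>\<beta>\<^sub>k \<in> [beta_lo, beta_hi]\<close> converge to some
  \<open>\<beta>\<^sup>* > 0\<close>; since \<open>z\<^sub>k - x\<^sub>k \<rightarrow> 0\<close>, the limit \<open>x\<^sup>*\<close> is a fixed point of the projected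
  gradient step with step size \<open>\<beta>\<^sup>*\<close>.\<close>

theorem accumulation_point_stationary:
  assumes r: "strict_mono r" and xr: "(x \<circ> r) \<longlonglongrightarrow> xs"
  shows "constrained_stationary m A B xs \<and> teicp_sol m A B (lam m A B xs) xs"
proof -
  have xsO: "xs \<in> Omega" by (rule accumulation_point_in_Omega[OF r xr])
  have "(\<beta> \<circ> r) k \<in> {beta_lo..beta_hi}" for k using beta_bounds by simp
  then obtain bs r2 where bs: "bs \<in> {beta_lo..beta_hi}" and r2: "strict_mono r2"
    and br: "((\<beta> \<circ> r) \<circ> r2) \<longlonglongrightarrow> bs"
    using compact_Icc[of beta_lo beta_hi] unfolding compact_def by meson
  define \<sigma> where "\<sigma> = r \<circ> r2"
  have x_lim: "(\<lambda>k. x (\<sigma> k)) \<longlonglongrightarrow> xs"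
    using LIMSEQ_subseq_LIMSEQ[OF xr r2] unfolding \<sigma>_def by (simp add: o_def)
  have "(\<lambda>k. grad m A B (x (\<sigma> k))) \<longlonglongrightarrow> grad m A B xs"
    using continuous_on_tendsto_compose[OF bounded_lipschitz_on_continuous_on[OF
        bounded_lipschitz_on_grad[OF pos_def_B]] x_lim] xsO Omega_subset_Omega_cap x_in_Omega_cap
    by auto
  moreover have "(\<lambda>k. \<beta> (\<sigma> k)) \<longlonglongrightarrow> bs" using br unfolding \<sigma>_def by (simp add: o_def)
  ultimately have "(\<lambda>k. x (\<sigma> k) + \<beta> (\<sigma> k) *\<^sub>R grad m A B (x (\<sigma> k))) \<longlonglongrightarrow> xs + bs *\<^sub>R grad m A B xs"
    by (intro tendsto_add tendsto_scaleR x_lim)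
  moreover have "(\<lambda>k. z (\<sigma> k) - x (\<sigma> k)) \<longlonglongrightarrow> 0"
    using LIMSEQ_subseq_LIMSEQ[OF z_minus_x_tendsto_zero strict_mono_o[OF r r2]]
    unfolding \<sigma>_def by (simp add: o_def)
  then have "(\<lambda>k. x (\<sigma> k) + (z (\<sigma> k) - x (\<sigma> k))) \<longlonglongrightarrow> xs + 0"
    by (intro tendsto_add x_lim)
  ultimately have "Omega_argmax (xs + bs *\<^sub>R grad m A B xs) xs"
    by (intro Omega_argmax_limit[OF _ _ z_argmax]) simp_all
  moreover have "0 < bs" using bs beta_lo_pos by simp
  ultimately show ?thesis using stationary_of_Omega_argmax_fixed[OF pos_def_B xsO] by blast
qed

theorem lam_tendsto_pareto_eigenvalue:
  "\<exists>l. pareto_eigenvalue m A B l \<and> (\<lambda>k. lam m A B (x k)) \<longlonglongrightarrow> l"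
proof -
  obtain xs r where xs: "xs \<in> Omega_cap" and r: "strict_mono r" and xr: "(x \<circ> r) \<longlonglongrightarrow> xs"
    using compact_Omega_cap x_in_Omega_cap unfolding compact_def by meson
  obtain l where l: "(\<lambda>k. lam m A B (x k)) \<longlonglongrightarrow> l" using lam_convergent convergent_def by blast
  have "(\<lambda>k. lam m A B ((x \<circ> r) k)) \<longlonglongrightarrow> lam m A B xs"
    using continuous_on_tendsto_compose[OF bounded_lipschitz_on_continuous_on[OF
        bounded_lipschitz_on_lam[OF pos_def_B]] xr xs] x_in_Omega_cap by simp
  moreover have "(\<lambda>k. lam m A B ((x \<circ> r) k)) \<longlonglongrightarrow> l"
    using LIMSEQ_subseq_LIMSEQ[OF l r] by (simp add: o_def)
  ultimately have "l = lam m A B xs" using LIMSEQ_unique by blast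
  then show ?thesis
    using accumulation_point_stationary[OF r xr] l unfolding pareto_eigenvalue_def by blast
qed

end

theorem theorem1:
  fixes m :: nat and A B :: "'n::finite list \<Rightarrow> real"
    and P :: "real^'n \<Rightarrow> real^'n"
    and \<rho> bmin bmax :: real and x :: "nat \<Rightarrow> real^'n" and \<beta> :: "nat \<Rightarrow> real"
  assumes "sym_tensor m A" and "sym_tensor m B" and "pos_def_tensor m B"
    and "is_proj_Omega P"
    and "0 < \<rho>" and "\<rho> < 1" and "0 < bmin" and "bmin \<le> bmax"
    and "spg1_run m A B P \<rho> bmin bmax x \<beta>"
  shows "(\<forall>k. (\<forall>i<k. spg_d m A B P (x i) (\<beta> i) \<noteq> 0) \<and> spg_d m A B P (x k) (\<beta> k) = 0
              \<longrightarrow> teicp_sol m A B (lam m A B (x k)) (x k))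
       \<and> ((\<forall>k. spg_d m A B P (x k) (\<beta> k) \<noteq> 0) \<longrightarrow>
            (\<forall>xs r. strict_mono r \<and> (x \<circ> r) \<longlonglongrightarrow> xs \<longrightarrow>
                constrained_stationary m A B xs \<and> teicp_sol m A B (lam m A B xs) xs)
          \<and> (\<exists>l. pareto_eigenvalue m A B l \<and> (\<lambda>k. lam m A B (x k)) \<longlonglongrightarrow> l))"
proof -
  interpret spg1 m A B P \<rho> bmin bmax x \<beta>
    using assms by unfold_locales
  have "\<forall>k. (\<forall>i<k. spg_d m A B P (x i) (\<beta> i) \<noteq> 0) \<and> spg_d m A B P (x k) (\<beta> k) = 0
      \<longrightarrow> teicp_sol m A B (lam m A B (x k)) (x k)"
    using stopped_teicp_sol by (simp add: spg_d_eq)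
  moreover have "(\<forall>k. spg_d m A B P (x k) (\<beta> k) \<noteq> 0) \<longrightarrow>
      (\<forall>xs r. strict_mono r \<and> (x \<circ> r) \<longlonglongrightarrow> xs \<longrightarrow>
         constrained_stationary m A B xs \<and> teicp_sol m A B (lam m A B xs) xs)
      \<and> (\<exists>l. pareto_eigenvalue m A B l \<and> (\<lambda>k. lam m A B (x k)) \<longlonglongrightarrow> l)"
  proof
    assume "\<forall>k. spg_d m A B P (x k) (\<beta> k) \<noteq> 0"
    then interpret spg1_nonstop m A B P \<rho> bmin bmax x \<beta>
      by unfold_locales blast
    show "(\<forall>xs r. strict_mono r \<and> (x \<circ> r) \<longlonglongrightarrow> xs \<longrightarrow>
         constrained_stationary m A B xs \<and> teicp_sol m A B (lam m A B xs) xs)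
      \<and> (\<exists>l. pareto_eigenvalue m A B l \<and> (\<lambda>k. lam m A B (x k)) \<longlonglongrightarrow> l)"
      using accumulation_point_stationary lam_tendsto_pareto_eigenvalue by blast
  qed
  ultimately show ?thesis by blast
qed

end
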